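(* Let $H$ be a balanced subgroup of $PL_o(I)$ whose only orbital is $A=(a,b)$, and let $\phi:H\to\mathbf{R}\times\mathbf{R}$ be $h\mapsto(\ln h'_+(a),\ln h'_-(b))$, where $h'_+(a)$ is the right derivative of $h$ at $a$ and $h'_-(b)$ the left derivative at $b$. Then $\phi$ is a homomorphism and its image $\phi(H)$ is either trivial or isomorphic to $\mathbf{Z}$.
   Context: $PL_o(I)$ is the group of orientation-preserving piecewise-linear homeomorphisms of $I=[0,1]$ with finitely many breaks in slope, acting on the right. The support of $h$ is the open set of points moved by $h$; an orbital of an element is a connected component of its support; an orbital of a subgroup $G$ is a connected component of the union of the supports of its elements. If $A$ is an orbital of a subgroup $G$ and $h\in G$, then $h$ realizes an end $e$ of $A$ if some orbital of $h$ is contained in $A$ and has $e$ as an endpoint. A group $H\le PL_o(I)$ is balanced if for every subgroup $G\le H$ and every orbital $A$ of $G$, every element of $G$ which realizes one end of $A$ also realizes the other end of $A$. *)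

theory Defs
  imports "HOL-Analysis.Analysis"
begin

text \<open>Elements of PL_o(I) are represented as functions real => real that are the
identity outside [0,1]; the right action means the product f*g is "g o f".\<close>

definition PLo :: "(real \<Rightarrow> real) \<Rightarrow> bool" where
  "PLo f \<longleftrightarrow>
     bij_betw f {0..1} {0..1} \<and> strict_mono_on {0..1} f \<and> continuous_on {0..1} f \<and>
     (\<forall>x. x \<notin> {0..1} \<longrightarrow> f x = x) \<and>
     (\<exists>S. finite S \<and>
        (\<forall>u v. u < v \<and> {u..v} \<subseteq> {0..1} \<and> {u<..<v} \<inter> S = {} \<longrightarrow>
           (\<exists>m c. \<forall>x\<in>{u..v}. f x = m * x + c)))"

definition PL_subgroup :: "(real \<Rightarrow> real) set \<Rightarrow> bool" where
  "PL_subgroup G \<longleftrightarrow> G \<subseteq> Collect PLo \<and> id \<in> G \<and>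
     (\<forall>f\<in>G. \<forall>g\<in>G. g \<circ> f \<in> G) \<and> (\<forall>f\<in>G. inv f \<in> G)"

definition supp :: "(real \<Rightarrow> real) \<Rightarrow> real set" where
  "supp h = {x\<in>{0..1}. h x \<noteq> x}"

definition elem_orbitals :: "(real \<Rightarrow> real) \<Rightarrow> real set set" where
  "elem_orbitals h = {connected_component_set (supp h) x | x. x \<in> supp h}"

definition group_orbitals :: "(real \<Rightarrow> real) set \<Rightarrow> real set set" where
  "group_orbitals G = {connected_component_set (\<Union>h\<in>G. supp h) x | x. x \<in> (\<Union>h\<in>G. supp h)}"

definition realizes :: "(real \<Rightarrow> real) \<Rightarrow> real set \<Rightarrow> real \<Rightarrow> bool" where
  "realizes h A e \<longleftrightarrow> (\<exists>B\<in>elem_orbitals h. B \<subseteq> A \<and> (e = Inf B \<or> e = Sup B))"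

definition balanced :: "(real \<Rightarrow> real) set \<Rightarrow> bool" where
  "balanced H \<longleftrightarrow> (\<forall>G. PL_subgroup G \<and> G \<subseteq> H \<longrightarrow>
     (\<forall>A\<in>group_orbitals G. \<forall>g\<in>G. realizes g A (Inf A) \<longleftrightarrow> realizes g A (Sup A)))"

definition right_deriv :: "(real \<Rightarrow> real) \<Rightarrow> real \<Rightarrow> real" where
  "right_deriv h a = (THE d. (h has_real_derivative d) (at a within {a..}))"

definition left_deriv :: "(real \<Rightarrow> real) \<Rightarrow> real \<Rightarrow> real" where
  "left_deriv h b = (THE d. (h has_real_derivative d) (at b within {..b}))"

end

(* The slopes at both ends are multiplicative under composition, so phi is a
   homomorphism, and balancedness applied to H itself shows that an element has slope 1 at a iff
   it has slope 1 at b. Hence phi(H) is a subgroup of R x R on which the first projection is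
   injective, and it suffices to show that the slopes at a do not accumulate at 1.
   Suppose they do. If some nontrivial k has slope 1 at both ends, conjugate it into a bump close
   to a, shrink it towards a, and conjugate it by the powers of an element of slope slightly above
   1: the overlapping bumps obtained generate a subgroup with an orbital whose left end is realized
   by the first bump and whose right end is not, contradicting balancedness. Otherwise the slope at
   a is faithful, so H is abelian. An element of slope close to 1 then commutes with elements that
   are linear near a and near b, hence is itself linear on fixed neighbourhoods of both ends; its
   commuting with an element carrying a piece near a affinely into the neighbourhood of b forces
   that affine map to send a to b, which is absurd. *)

theory Submission
  imports Defs
begin

lemma PLo_fixes_outside: "PLo h \<Longrightarrow> x \<notin> {0..1} \<Longrightarrow> h x = x"
  unfolding PLo_def by blast

lemma PLo_maps_unit: "PLo h \<Longrightarrow> x \<in> {0..1} \<Longrightarrow> h x \<in> {0..1}"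
  unfolding PLo_def by (meson bij_betw_apply)

lemma PLo_strict_mono: assumes "PLo h" shows "strict_mono h"
proof (rule strict_monoI)
  fix x y :: real assume "x < y"
  have "strict_mono_on {0..1} h" using assms unfolding PLo_def by blast
  then show "h x < h y"
    using \<open>x < y\<close> PLo_fixes_outside[OF assms] PLo_maps_unit[OF assms, of x] PLo_maps_unit[OF assms, of y]
    by (cases "x \<in> {0..1}"; cases "y \<in> {0..1}") (force simp: strict_mono_on_def)+
qed

lemma PLo_less_iff: "PLo h \<Longrightarrow> h x < h y \<longleftrightarrow> x < y"
  using PLo_strict_mono strict_mono_less by blast

lemma PLo_le_iff: "PLo h \<Longrightarrow> h x \<le> h y \<longleftrightarrow> x \<le> y"
  using PLo_strict_mono strict_mono_less_eq by blast

lemma PLo_surj: assumes "PLo h" shows "surj h"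
proof -
  have "h ` {0..1} = {0..1}" using assms unfolding PLo_def bij_betw_def by blast
  then have "y \<in> range h" for y
    using PLo_fixes_outside[OF assms, of y] by (cases "y \<in> {0..1}") (blast, metis rangeI)
  then show ?thesis by blast
qed

lemma PLo_inv_apply [simp]: "PLo h \<Longrightarrow> inv h (h x) = x"
  by (meson PLo_strict_mono inv_f_f strict_mono_imp_inj_on)

lemma PLo_apply_inv [simp]: "PLo h \<Longrightarrow> h (inv h x) = x"
  by (rule surj_f_inv_f[OF PLo_surj])

lemma PLo_inv_comp: "PLo h \<Longrightarrow> inv h \<circ> h = id"
  by (simp add: fun_eq_iff)

lemma PLo_isCont: assumes "PLo h" "0 < x" "x < 1" shows "isCont h x"
proof -
  have "continuous_on {0..1} h" using assms(1) unfolding PLo_def by blast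
  then show ?thesis using assms(2,3) continuous_on_interior[of "{0..1}" h x] by simp
qed

lemma PLo_affine_near:
  assumes "PLo h"
  obtains \<delta> where "\<delta> > 0"
    and "\<And>u v. u < v \<Longrightarrow> {u..v} \<subseteq> {0..1} \<Longrightarrow> {u..v} \<subseteq> {e..e+\<delta>} \<or> {u..v} \<subseteq> {e-\<delta>..e} \<Longrightarrow>
           \<exists>m c. m > 0 \<and> (\<forall>x\<in>{u..v}. h x = m * x + c)"
proof -
  obtain S where S: "finite S" "\<And>u v. u < v \<Longrightarrow> {u..v} \<subseteq> {0..1} \<Longrightarrow> {u<..<v} \<inter> S = {} \<Longrightarrow>
           \<exists>m c. \<forall>x\<in>{u..v}. h x = m * x + c"
    using assms unfolding PLo_def by blast
  obtain \<delta> where \<delta>: "\<delta> > 0" "\<forall>s\<in>S. s \<noteq> e \<longrightarrow> \<delta> \<le> dist e s"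
    using finite_set_avoid[OF S(1)] by blast
  show ?thesis
  proof (rule that[OF \<delta>(1)])
    fix u v assume uv: "u < v" "{u..v} \<subseteq> {0..1}" "{u..v} \<subseteq> {e..e+\<delta>} \<or> {u..v} \<subseteq> {e-\<delta>..e}"
    have "{u<..<v} \<inter> S = {}"
      using uv(1,3) \<delta>(2) by (fastforce simp: dist_real_def)
    then obtain m c where mc: "\<forall>x\<in>{u..v}. h x = m * x + c" using S(2) uv by blast
    have "m * u + c < m * v + c"
      using mc uv(1) PLo_less_iff[OF assms, of u v] by auto
    then have "m > 0" using uv(1) by (smt (verit) mult_le_cancel_left)
    then show "\<exists>m c. m > 0 \<and> (\<forall>x\<in>{u..v}. h x = m * x + c)" using mc by blast
  qed
qed

lemma PLo_affine_right:
  assumes "PLo h" "0 \<le> e" "e < 1"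
  obtains \<delta> m c where "\<delta> > 0" "e + \<delta> \<le> 1" "m > 0" "\<forall>x\<in>{e..e+\<delta>}. h x = m * x + c"
proof -
  obtain \<delta> where \<delta>: "\<delta> > 0" "\<And>u v. u < v \<Longrightarrow> {u..v} \<subseteq> {0..1} \<Longrightarrow> {u..v} \<subseteq> {e..e+\<delta>} \<or> {u..v} \<subseteq> {e-\<delta>..e} \<Longrightarrow>
           \<exists>m c. m > 0 \<and> (\<forall>x\<in>{u..v}. h x = m * x + c)"
    using PLo_affine_near[OF assms(1)] by blast
  define \<delta>' where "\<delta>' = min \<delta> (1 - e)"
  have "\<delta>' > 0" "e + \<delta>' \<le> 1" using \<delta>(1) assms unfolding \<delta>'_def by auto
  moreover obtain m c where "m > 0" "\<forall>x\<in>{e..e+\<delta>'}. h x = m * x + c"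
    using \<delta>(2)[of e "e + \<delta>'"] \<open>\<delta>' > 0\<close> \<open>e + \<delta>' \<le> 1\<close> assms(2) unfolding \<delta>'_def by auto
  ultimately show ?thesis using that by blast
qed

lemma PLo_affine_left:
  assumes "PLo h" "0 < e" "e \<le> 1"
  obtains \<delta> m c where "\<delta> > 0" "0 \<le> e - \<delta>" "m > 0" "\<forall>x\<in>{e-\<delta>..e}. h x = m * x + c"
proof -
  obtain \<delta> where \<delta>: "\<delta> > 0" "\<And>u v. u < v \<Longrightarrow> {u..v} \<subseteq> {0..1} \<Longrightarrow> {u..v} \<subseteq> {e..e+\<delta>} \<or> {u..v} \<subseteq> {e-\<delta>..e} \<Longrightarrow>
           \<exists>m c. m > 0 \<and> (\<forall>x\<in>{u..v}. h x = m * x + c)"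
    using PLo_affine_near[OF assms(1)] by blast
  define \<delta>' where "\<delta>' = min \<delta> e"
  have "\<delta>' > 0" "0 \<le> e - \<delta>'" using \<delta>(1) assms unfolding \<delta>'_def by auto
  moreover obtain m c where "m > 0" "\<forall>x\<in>{e-\<delta>'..e}. h x = m * x + c"
    using \<delta>(2)[of "e - \<delta>'" e] \<open>\<delta>' > 0\<close> \<open>0 \<le> e - \<delta>'\<close> assms(3) unfolding \<delta>'_def by auto
  ultimately show ?thesis using that by blast
qed

section \<open>Linear germs at a fixed point\<close>

text \<open>The sign \<open>\<sigma>\<close> selects the side of the fixed point \<open>e\<close>: \<open>\<sigma> = 1\<close> describes \<open>h\<close> on
  \<open>[e, e + \<delta>]\<close> and \<open>\<sigma> = -1\<close> on \<open>[e - \<delta>, e]\<close>, so that one argument serves both ends of an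
  orbital.\<close>

definition linear_germ :: "real \<Rightarrow> real \<Rightarrow> (real \<Rightarrow> real) \<Rightarrow> real \<Rightarrow> real \<Rightarrow> bool" where
  "linear_germ \<sigma> e h m \<delta> \<longleftrightarrow> (\<forall>t\<in>{0..\<delta>}. h (e + \<sigma> * t) = e + \<sigma> * (m * t))"

lemma linear_germ_right: "linear_germ 1 a h m \<delta> \<longleftrightarrow> (\<forall>x\<in>{a..a+\<delta>}. h x = a + m * (x - a))"
  unfolding linear_germ_def
  by (smt (verit, ccfv_SIG) atLeastAtMost_iff diff_add_cancel add_diff_cancel_left' mult_1)

lemma linear_germ_left: "linear_germ (-1) b h m \<delta> \<longleftrightarrow> (\<forall>x\<in>{b-\<delta>..b}. h x = b + m * (x - b))"
proof -
  have "(\<forall>t\<in>{0..\<delta>}. h (b - t) = b - m * t) \<longleftrightarrow> (\<forall>x\<in>{b-\<delta>..b}. h x = b + m * (x - b))"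
  proof
    assume *: "\<forall>t\<in>{0..\<delta>}. h (b - t) = b - m * t"
    show "\<forall>x\<in>{b-\<delta>..b}. h x = b + m * (x - b)"
    proof
      fix x assume "x \<in> {b-\<delta>..b}"
      then show "h x = b + m * (x - b)" using *[rule_format, of "b - x"] by (simp add: algebra_simps)
    qed
  next
    assume *: "\<forall>x\<in>{b-\<delta>..b}. h x = b + m * (x - b)"
    show "\<forall>t\<in>{0..\<delta>}. h (b - t) = b - m * t"
    proof
      fix t assume "t \<in> {0..\<delta>}"
      then show "h (b - t) = b - m * t" using *[rule_format, of "b - t"] by (simp add: algebra_simps)
    qed
  qed
  then show ?thesis unfolding linear_germ_def by simp
qed

lemma linear_germ_mono: "linear_germ \<sigma> e h m \<delta> \<Longrightarrow> \<delta>' \<le> \<delta> \<Longrightarrow> linear_germ \<sigma> e h m \<delta>'"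
  unfolding linear_germ_def by auto

lemma linear_germ_id: "linear_germ \<sigma> e id 1 \<delta>"
  unfolding linear_germ_def by simp

lemma linear_germ_comp:
  assumes "0 < m" "linear_germ \<sigma> e f m \<delta>" "linear_germ \<sigma> e g n \<delta>'"
  shows "linear_germ \<sigma> e (g \<circ> f) (m * n) (min \<delta> (\<delta>' / m))"
  unfolding linear_germ_def
proof
  fix t assume t: "t \<in> {0..min \<delta> (\<delta>' / m)}"
  then have "m * t \<in> {0..\<delta>'}" using assms(1) by (simp add: pos_le_divide_eq mult.commute)
  then have "g (e + \<sigma> * (m * t)) = e + \<sigma> * (n * (m * t))"
    using assms(3) unfolding linear_germ_def by blast
  moreover have "f (e + \<sigma> * t) = e + \<sigma> * (m * t)"
    using assms(2) t unfolding linear_germ_def by auto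
  ultimately show "(g \<circ> f) (e + \<sigma> * t) = e + \<sigma> * (m * n * t)" by (simp add: mult_ac)
qed

lemma linear_germ_funpow:
  assumes "0 \<le> \<mu>" "linear_germ \<sigma> e w \<mu> \<delta>" "0 \<le> t" "\<forall>i<j. \<mu> ^ i * t \<le> \<delta>"
  shows "(w ^^ j) (e + \<sigma> * t) = e + \<sigma> * (\<mu> ^ j * t)"
  using assms(4)
proof (induction j)
  case (Suc j)
  then have "(w ^^ j) (e + \<sigma> * t) = e + \<sigma> * (\<mu> ^ j * t)" "\<mu> ^ j * t \<in> {0..\<delta>}"
    using assms(1,3) by auto
  moreover have "w (e + \<sigma> * (\<mu> ^ j * t)) = e + \<sigma> * (\<mu> * (\<mu> ^ j * t))"
    using assms(2) \<open>\<mu> ^ j * t \<in> {0..\<delta>}\<close> unfolding linear_germ_def by blast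
  ultimately show ?case by (simp add: mult_ac)
qed simp

text \<open>Since \<open>h\<close> commutes with \<open>g\<close>, conjugation by \<open>g\<close> carries the germ of \<open>h\<close> from length
  \<open>\<delta>\<close> to length \<open>\<kappa>\<^sup>n \<delta>\<close>, as long as \<open>g\<close> stays linear.\<close>

lemma linear_germ_extend_commuting:
  assumes "\<kappa> > 1" "linear_germ \<sigma> e g \<kappa> \<epsilon>" "\<delta> > 0" "linear_germ \<sigma> e h \<mu> \<delta>" "0 < \<mu>" "\<mu> \<le> \<kappa>"
    and comm: "\<And>y. h (g y) = g (h y)"
  shows "linear_germ \<sigma> e h \<mu> \<epsilon>"
proof -
  have step: "\<forall>t. 0 \<le> t \<and> t \<le> \<epsilon> \<and> t \<le> \<kappa> ^ n * \<delta> \<longrightarrow> h (e + \<sigma> * t) = e + \<sigma> * (\<mu> * t)" for n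
  proof (induction n)
    case 0 then show ?case using assms(4) unfolding linear_germ_def by auto
  next
    case (Suc n)
    show ?case
    proof (intro allI impI)
      fix t assume t: "0 \<le> t \<and> t \<le> \<epsilon> \<and> t \<le> \<kappa> ^ Suc n * \<delta>"
      define s where "s = t / \<kappa>"
      have ts: "t = \<kappa> * s" "0 \<le> s" using t assms(1) unfolding s_def by auto
      have "s \<le> t" using ts assms(1) by (simp add: mult_le_cancel_right1)
      have "s \<le> \<kappa> ^ n * \<delta>" using t ts(1) assms(1) by simp
      then have hs: "h (e + \<sigma> * s) = e + \<sigma> * (\<mu> * s)" using Suc.IH ts \<open>s \<le> t\<close> t by auto
      have "\<mu> * s \<le> \<kappa> * s" using assms(6) ts(2) by (rule mult_right_mono)
      then have "\<mu> * s \<in> {0..\<epsilon>}" "s \<in> {0..\<epsilon>}" using ts \<open>s \<le> t\<close> t assms(5) by auto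
      then have "h (e + \<sigma> * t) = g (h (e + \<sigma> * s))"
        using assms(2) ts(1) comm unfolding linear_germ_def by metis
      also have "\<dots> = e + \<sigma> * (\<kappa> * (\<mu> * s))"
        using hs assms(2) \<open>\<mu> * s \<in> {0..\<epsilon>}\<close> unfolding linear_germ_def by simp
      also have "\<dots> = e + \<sigma> * (\<mu> * t)" using ts(1) by (simp add: mult_ac)
      finally show "h (e + \<sigma> * t) = e + \<sigma> * (\<mu> * t)" .
    qed
  qed
  show ?thesis
    unfolding linear_germ_def
  proof
    fix t assume t: "t \<in> {0..\<epsilon>}"
    obtain n where "t / \<delta> < \<kappa> ^ n" using real_arch_pow[OF assms(1)] by blast
    then have "t \<le> \<kappa> ^ n * \<delta>" using assms(3) by (simp add: field_simps)
    then show "h (e + \<sigma> * t) = e + \<sigma> * (\<mu> * t)" using step t by auto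
  qed
qed

lemma right_deriv_eqI:
  assumes "\<delta> > 0" "linear_germ 1 a h m \<delta>"
  shows "right_deriv h a = m"
proof -
  have "((\<lambda>x. a + m * (x - a)) has_real_derivative m) (at a within {a..})"
    by (auto intro!: derivative_eq_intros)
  then have d: "(h has_real_derivative m) (at a within {a..})"
    by (rule has_field_derivative_transform_within[OF _ assms(1)])
      (use assms(2) in \<open>auto simp: linear_germ_right dist_real_def\<close>)
  have "at a within {a..} \<noteq> bot" by (simp add: at_within_Ici_at_right)
  then show ?thesis
    unfolding right_deriv_def using d has_field_derivative_unique by blast
qed

lemma left_deriv_eqI:
  assumes "\<delta> > 0" "linear_germ (-1) b h m \<delta>"
  shows "left_deriv h b = m"
proof -
  have "((\<lambda>x. b + m * (x - b)) has_real_derivative m) (at b within {..b})"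
    by (auto intro!: derivative_eq_intros)
  then have d: "(h has_real_derivative m) (at b within {..b})"
    by (rule has_field_derivative_transform_within[OF _ assms(1)])
      (use assms(2) in \<open>auto simp: linear_germ_left dist_real_def\<close>)
  have "at b within {..b} \<noteq> bot" by (simp add: at_within_Iic_at_left)
  then show ?thesis
    unfolding left_deriv_def using d has_field_derivative_unique by blast
qed

lemma PLo_linear_germ_right:
  assumes "PLo h" "0 \<le> e" "e < 1" "h e = e"
  obtains \<delta> m where "\<delta> > 0" "e + \<delta> \<le> 1" "m > 0" "linear_germ 1 e h m \<delta>"
proof -
  obtain \<delta> m c where d: "\<delta> > 0" "e + \<delta> \<le> 1" "m > 0" "\<forall>x\<in>{e..e+\<delta>}. h x = m * x + c"
    using PLo_affine_right[OF assms(1-3)] by blast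
  then have "c = e - m * e" using assms(4) by auto
  then have "linear_germ 1 e h m \<delta>" using d(4) unfolding linear_germ_right by (simp add: algebra_simps)
  then show ?thesis using that d(1-3) by blast
qed

lemma PLo_linear_germ_left:
  assumes "PLo h" "0 < e" "e \<le> 1" "h e = e"
  obtains \<delta> m where "\<delta> > 0" "0 \<le> e - \<delta>" "m > 0" "linear_germ (-1) e h m \<delta>"
proof -
  obtain \<delta> m c where d: "\<delta> > 0" "0 \<le> e - \<delta>" "m > 0" "\<forall>x\<in>{e-\<delta>..e}. h x = m * x + c"
    using PLo_affine_left[OF assms(1-3)] by blast
  then have "c = e - m * e" using assms(4) by auto
  then have "linear_germ (-1) e h m \<delta>" using d(4) unfolding linear_germ_left by (simp add: algebra_simps)
  then show ?thesis using that d(1-3) by blast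
qed

section \<open>Supports and orbitals\<close>

lemma PLo_fixes_endpoints: assumes "PLo h" shows "h 0 = 0" "h 1 = 1"
proof -
  have img: "h ` {0..1} = {0..1}" using assms unfolding PLo_def bij_betw_def by blast
  then have "0 \<in> h ` {0..1}" "1 \<in> h ` {0..1}" by auto
  then obtain z0 z1 where z: "z0 \<in> {0..1}" "h z0 = 0" "z1 \<in> {0..1}" "h z1 = 1" by (metis imageE)
  have "h 0 \<le> h z0" "h z1 \<le> h 1"
    using z(1,3) PLo_le_iff[OF assms, of 0 z0] PLo_le_iff[OF assms, of z1 1] by auto
  moreover have "h 0 \<in> {0..1}" "h 1 \<in> {0..1}" using PLo_maps_unit[OF assms] by auto
  ultimately show "h 0 = 0" "h 1 = 1" using z by auto
qed

lemma supp_subset_unit: "supp h \<subseteq> {0..1}"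
  unfolding supp_def by auto

lemma bdd_supp: "bdd_below (supp h)" "bdd_above (supp h)"
  using bdd_below_mono[OF bdd_below_Icc supp_subset_unit] bdd_above_mono[OF bdd_above_Icc supp_subset_unit] .

lemma Inf_supp_bounds: assumes "supp h \<noteq> {}" shows "0 \<le> Inf (supp h)" "Inf (supp h) \<le> 1"
proof -
  obtain y where y: "y \<in> supp h" using assms by blast
  have "Inf (supp h) \<le> y" by (rule cInf_lower[OF y bdd_supp(1)])
  then show "Inf (supp h) \<le> 1" using y unfolding supp_def by simp
  show "0 \<le> Inf (supp h)" using assms unfolding supp_def by (intro cInf_greatest) auto
qed

lemma PLo_fixes_off_supp: "PLo h \<Longrightarrow> x \<notin> supp h \<Longrightarrow> h x = x"
  unfolding supp_def using PLo_fixes_outside by blast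

lemma supp_id [simp]: "supp id = {}"
  unfolding supp_def by simp

lemma supp_comp: "supp (g \<circ> f) \<subseteq> supp f \<union> supp g"
  unfolding supp_def by auto

lemma supp_inv: assumes "PLo g" shows "supp (inv g) = supp g"
proof -
  have "inv g x = x \<longleftrightarrow> g x = x" for x
    using PLo_apply_inv[OF assms, of x] PLo_inv_apply[OF assms, of x] by metis
  then show ?thesis unfolding supp_def by auto
qed

lemma supp_conj: assumes "PLo w" shows "supp (w \<circ> k \<circ> inv w) = w ` supp k"
proof -
  have moves: "w (k y) \<noteq> w y \<longleftrightarrow> k y \<noteq> y" for y
    using strict_mono_eq[OF PLo_strict_mono[OF assms]] by simp
  have unit: "w y \<in> {0..1} \<longleftrightarrow> y \<in> {0..1}" for y
    using PLo_maps_unit[OF assms, of y] PLo_fixes_outside[OF assms, of y] by (cases "y \<in> {0..1}") auto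
  have iff: "x \<in> supp (w \<circ> k \<circ> inv w) \<longleftrightarrow> inv w x \<in> supp k" for x
  proof -
    have "w (inv w x) = x" using assms by simp
    then show ?thesis using moves[of "inv w x"] unit[of "inv w x"] unfolding supp_def by auto
  qed
  show ?thesis
  proof
    show "supp (w \<circ> k \<circ> inv w) \<subseteq> w ` supp k"
    proof
      fix x assume "x \<in> supp (w \<circ> k \<circ> inv w)"
      then have "inv w x \<in> supp k" using iff by blast
      moreover have "x = w (inv w x)" using assms by simp
      ultimately show "x \<in> w ` supp k" by (rule rev_image_eqI)
    qed
    show "w ` supp k \<subseteq> supp (w \<circ> k \<circ> inv w)"
    proof
      fix x assume "x \<in> w ` supp k"
      then obtain y where "y \<in> supp k" "x = w y" by blast
      then show "x \<in> supp (w \<circ> k \<circ> inv w)" using iff[of x] assms by simp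
    qed
  qed
qed

lemma PL_subgroup_supported_in:
  assumes "PL_subgroup H"
  shows "PL_subgroup {g\<in>H. supp g \<subseteq> V}"
  unfolding PL_subgroup_def
proof (intro conjI ballI)
  fix f g assume "f \<in> {g\<in>H. supp g \<subseteq> V}" "g \<in> {g\<in>H. supp g \<subseteq> V}"
  then show "g \<circ> f \<in> {g\<in>H. supp g \<subseteq> V}"
    using assms supp_comp[of g f] unfolding PL_subgroup_def by blast
next
  fix f assume "f \<in> {g\<in>H. supp g \<subseteq> V}"
  then show "inv f \<in> {g\<in>H. supp g \<subseteq> V}"
    using assms supp_inv[of f] unfolding PL_subgroup_def by auto
qed (use assms in \<open>auto simp: PL_subgroup_def\<close>)

lemma Inf_eq_left_endpoint:
  fixes B :: "real set"
  assumes "a < c" "{a<..<c} \<subseteq> B" "B \<subseteq> {a<..}"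
  shows "Inf B = a"
proof (rule antisym)
  have "Inf B \<le> Inf {a<..<c}"
    by (rule cInf_superset_mono) (use assms in \<open>auto intro!: bdd_belowI[of _ a]\<close>)
  then show "Inf B \<le> a" using assms(1) by simp
  show "a \<le> Inf B" by (rule cInf_greatest) (use assms in auto)
qed

lemma Sup_eq_right_endpoint:
  fixes B :: "real set"
  assumes "c < b" "{c<..<b} \<subseteq> B" "B \<subseteq> {..<b}"
  shows "Sup B = b"
proof (rule antisym)
  have "Sup {c<..<b} \<le> Sup B"
    by (rule cSup_subset_mono) (use assms in \<open>auto intro!: bdd_aboveI[of _ b]\<close>)
  then show "b \<le> Sup B" using assms(1) by simp
  show "Sup B \<le> b" by (rule cSup_least) (use assms in auto)
qed

lemma elem_orbital_containing:
  assumes "x \<in> I" "connected I" "I \<subseteq> supp h"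
  shows "connected_component_set (supp h) x \<in> elem_orbitals h"
    and "I \<subseteq> connected_component_set (supp h) x"
  using assms connected_component_maximal unfolding elem_orbitals_def by blast+

lemma realizes_left_endpoint:
  assumes "p < p1" "{p<..<p1} \<subseteq> supp h" "supp h \<subseteq> A" "A \<subseteq> {p<..}"
  shows "realizes h A p"
proof -
  define B where "B = connected_component_set (supp h) ((p + p1) / 2)"
  have "B \<in> elem_orbitals h" "{p<..<p1} \<subseteq> B"
    unfolding B_def using elem_orbital_containing[of _ "{p<..<p1}"] assms(1,2) by auto
  moreover have "B \<subseteq> A" unfolding B_def using assms(3) connected_component_subset by blast
  moreover have "Inf B = p" using Inf_eq_left_endpoint[OF assms(1)] calculation assms(4) by blast
  ultimately show ?thesis unfolding realizes_def by blast
qed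

lemma realizes_right_endpoint:
  assumes "q1 < q" "{q1<..<q} \<subseteq> supp h" "supp h \<subseteq> A" "A \<subseteq> {..<q}"
  shows "realizes h A q"
proof -
  define B where "B = connected_component_set (supp h) ((q1 + q) / 2)"
  have "B \<in> elem_orbitals h" "{q1<..<q} \<subseteq> B"
    unfolding B_def using elem_orbital_containing[of _ "{q1<..<q}"] assms(1,2) by auto
  moreover have "B \<subseteq> A" unfolding B_def using assms(3) connected_component_subset by blast
  moreover have "Sup B = q" using Sup_eq_right_endpoint[OF assms(1)] calculation assms(4) by blast
  ultimately show ?thesis unfolding realizes_def by blast
qed

text \<open>The ends of an orbital lie in its closure, so they are not fixed together with a
  neighbourhood.\<close>

lemma not_realizes_if_fixes_ball:
  assumes "\<delta> > 0" "\<And>x. x \<in> ball e \<delta> \<Longrightarrow> h x = x"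
  shows "\<not> realizes h A e"
proof
  assume "realizes h A e"
  then obtain B where B: "B \<in> elem_orbitals h" "e = Inf B \<or> e = Sup B"
    unfolding realizes_def by blast
  then obtain x where x: "x \<in> supp h" "B = connected_component_set (supp h) x"
    unfolding elem_orbitals_def by blast
  then have "B \<noteq> {}" using connected_component_refl by blast
  have "B \<subseteq> supp h" using x(2) connected_component_subset by blast
  note \<open>B \<noteq> {}\<close> \<open>B \<subseteq> supp h\<close>
  moreover have "bdd_below B" "bdd_above B"
    using bdd_below_mono[OF bdd_supp(1) \<open>B \<subseteq> supp h\<close>] bdd_above_mono[OF bdd_supp(2) \<open>B \<subseteq> supp h\<close>] .
  ultimately have "e \<in> closure B" using B(2) closure_contains_Inf closure_contains_Sup by metis
  then obtain x where "x \<in> B" "dist x e < \<delta>" using assms(1) closure_approachable by blast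
  then have "x \<in> ball e \<delta>" by (simp add: dist_commute)
  then show False using assms(2) \<open>x \<in> B\<close> \<open>B \<subseteq> supp h\<close> unfolding supp_def by auto
qed

lemma not_realizes_right_of_supp:
  assumes "PLo h" "supp h \<subseteq> {..<q}" "q < e"
  shows "\<not> realizes h A e"
proof (rule not_realizes_if_fixes_ball[of "e - q"])
  show "0 < e - q" using assms(3) by simp
  fix x assume "x \<in> ball e (e - q)"
  then have "x \<notin> supp h" using assms(2) by (auto simp: dist_real_def)
  then show "h x = x" using PLo_fixes_off_supp[OF assms(1)] by blast
qed

lemma PLo_fixes_Inf_supp:
  assumes "PLo k" "supp k \<noteq> {}"
  shows "k (Inf (supp k)) = Inf (supp k)"
proof -
  define p where "p = Inf (supp k)"
  have below: "p \<le> y" if "y \<in> supp k" for y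
    unfolding p_def using that bdd_supp(1) by (rule cInf_lower)
  have "0 \<le> p" "p \<le> 1" unfolding p_def using Inf_supp_bounds[OF assms(2)] by auto
  show ?thesis
  proof (cases "p = 0")
    case True then show ?thesis using PLo_fixes_endpoints[OF assms(1)] unfolding p_def by simp
  next
    case False
    obtain \<delta> m c where d: "\<delta> > 0" "0 \<le> p - \<delta>" "\<forall>x\<in>{p-\<delta>..p}. k x = m * x + c"
      using PLo_affine_left[OF assms(1)] \<open>0 \<le> p\<close> \<open>p \<le> 1\<close> False by (metis order_le_less)
    have fixed: "m * x + c = x" if "x \<in> {p-\<delta>..<p}" for x
      using d(2,3) that below[of x] \<open>p \<le> 1\<close> unfolding supp_def by force
    have "m * (p - \<delta>) + c = p - \<delta>" "m * (p - \<delta>/2) + c = p - \<delta>/2"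
      using fixed d(1) by auto
    then have "m * p - m * \<delta> + c = p - \<delta>" "m * p - m * \<delta> / 2 + c = p - \<delta> / 2"
      by (simp_all add: right_diff_distrib)
    then have "m * \<delta> = \<delta>" by linarith
    then have "m = 1" "c = 0" using d(1) \<open>m * (p - \<delta>) + c = p - \<delta>\<close> by simp_all
    then show ?thesis using d(1,3) unfolding p_def by auto
  qed
qed

lemma PLo_supp_starts_with_interval:
  assumes "PLo k" "supp k \<noteq> {}"
  obtains p1 where "Inf (supp k) < p1" "{Inf (supp k)<..<p1} \<subseteq> supp k" "supp k \<subseteq> {Inf (supp k)<..}"
proof -
  define p where "p = Inf (supp k)"
  have below: "p \<le> y" if "y \<in> supp k" for y
    unfolding p_def using that bdd_supp(1) by (rule cInf_lower)
  have kp: "k p = p" unfolding p_def using PLo_fixes_Inf_supp[OF assms] .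
  have above: "supp k \<subseteq> {p<..}"
  proof
    fix y assume "y \<in> supp k"
    then show "y \<in> {p<..}" using below[of y] kp unfolding supp_def by (cases "y = p") auto
  qed
  obtain y where y: "y \<in> supp k" using assms(2) by blast
  then have "y < 1" using PLo_fixes_endpoints(2)[OF assms(1)] unfolding supp_def by (cases "y = 1") auto
  then have "0 \<le> p" "p < 1" using above y Inf_supp_bounds[OF assms(2)] unfolding p_def by force+
  then obtain \<eta> m c where r: "\<eta> > 0" "p + \<eta> \<le> 1" "\<forall>x\<in>{p..p+\<eta>}. k x = m * x + c"
    using PLo_affine_right[OF assms(1)] by metis
  then have moved: "k x - x = (m - 1) * (x - p)" if "x \<in> {p..p+\<eta>}" for x
    using kp that by (auto simp: algebra_simps)
  have "m \<noteq> 1"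
  proof
    assume "m = 1"
    then have "p + \<eta> \<le> y" if "y \<in> supp k" for y
      using moved[of y] above that unfolding supp_def by force
    then have "p + \<eta> \<le> p" unfolding p_def using assms(2) by (intro cInf_greatest) auto
    then show False using r(1) by simp
  qed
  have "{p<..<p+\<eta>} \<subseteq> supp k"
  proof
    fix x assume x: "x \<in> {p<..<p+\<eta>}"
    then have "k x \<noteq> x" using moved[of x] \<open>m \<noteq> 1\<close> by auto
    then show "x \<in> supp k" using x r(2) \<open>0 \<le> p\<close> unfolding supp_def by auto
  qed
  then show ?thesis using that[of "p + \<eta>"] r(1) above unfolding p_def by auto
qed

lemma scaled_intervals_cover:
  fixes a p p1 \<mu> :: real
  assumes "0 < \<mu>" "\<mu> * (p - a) < p1 - a"
  shows "{p<..<a + \<mu> ^ J * (p1 - a)} \<subseteq> (\<Union>j\<le>J. {a + \<mu> ^ j * (p - a)<..<a + \<mu> ^ j * (p1 - a)})"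
proof (induction J)
  case (Suc J)
  show ?case
  proof
    fix z assume z: "z \<in> {p<..<a + \<mu> ^ Suc J * (p1 - a)}"
    show "z \<in> (\<Union>j\<le>Suc J. {a + \<mu> ^ j * (p - a)<..<a + \<mu> ^ j * (p1 - a)})"
    proof (cases "z < a + \<mu> ^ J * (p1 - a)")
      case True
      then have "z \<in> {p<..<a + \<mu> ^ J * (p1 - a)}" using z by simp
      then obtain j where "j \<le> J" "z \<in> {a + \<mu> ^ j * (p - a)<..<a + \<mu> ^ j * (p1 - a)}"
        using Suc.IH by blast
      then show ?thesis by (intro UN_I[of j]) auto
    next
      case False
      have "\<mu> ^ J * (\<mu> * (p - a)) < \<mu> ^ J * (p1 - a)" using assms by simp
      then have "a + \<mu> ^ Suc J * (p - a) < z" using False by (simp add: mult_ac)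
      then show ?thesis using z by (intro UN_I[of "Suc J"]) auto
    qed
  qed
qed simp

lemma two_points_mapped_into_interval:
  fixes P Q \<mu> :: real
  assumes "0 < \<mu>" "P < Q" "\<mu> * P < Q" "P < \<mu> * Q"
  obtains t1 t2 where "t1 < t2" "\<forall>t\<in>{t1, t2}. P \<le> t \<and> t \<le> Q \<and> P \<le> \<mu> * t \<and> \<mu> * t \<le> Q"
proof -
  define t1 where "t1 = max P (P / \<mu>)"
  define t2 where "t2 = min Q (Q / \<mu>)"
  have "P < Q / \<mu>" "P / \<mu> < Q" "P / \<mu> < Q / \<mu>"
    using assms by (simp_all add: pos_less_divide_eq pos_divide_less_eq divide_strict_right_mono mult.commute)
  then have "t1 < t2" unfolding t1_def t2_def using assms(2) by simp
  moreover have "P \<le> \<mu> * t" "\<mu> * t \<le> Q" if "t1 \<le> t" "t \<le> t2" for t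
  proof -
    have "P / \<mu> \<le> t" "t \<le> Q / \<mu>" using that unfolding t1_def t2_def by auto
    then show "P \<le> \<mu> * t" "\<mu> * t \<le> Q" using assms(1) by (simp_all add: pos_divide_le_eq pos_le_divide_eq mult.commute)
  qed
  moreover have "P \<le> t1" "t2 \<le> Q" unfolding t1_def t2_def by auto
  ultimately show ?thesis using that[of t1 t2] by fastforce
qed

lemma affine_identity_at_two_points:
  fixes s c a b \<mu> \<rho> t1 t2 :: real
  assumes "s \<noteq> 0" "\<mu> \<noteq> 1" "t1 \<noteq> t2"
    and "s * (a + \<mu> * t1) + c = b + \<rho> * (s * (a + t1) + c - b)"
    and "s * (a + \<mu> * t2) + c = b + \<rho> * (s * (a + t2) + c - b)"
  shows "s * a + c = b"
proof -
  have "s * \<mu> * (t1 - t2) = \<rho> * s * (t1 - t2)" using assms(4,5) by (simp add: algebra_simps)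
  then have "\<mu> = \<rho>" using assms(1,3) by simp
  then have "(1 - \<mu>) * (s * a + c - b) = 0" using assms(4) by (simp add: algebra_simps)
  then show ?thesis using assms(2) by simp
qed

text \<open>If \<open>h\<close> is linear of slope \<open>\<mu> \<noteq> 1\<close> about \<open>a\<close> and about \<open>b\<close>, then it cannot commute
  with a map \<open>F\<close> that is affine on a piece of the first region and carries it into the second:
  the affine extension of \<open>F\<close> would have to send \<open>a\<close> to \<open>b\<close>.\<close>

lemma commuting_affine_transfer_contra:
  fixes a b u v s c \<mu> \<rho> :: real
  assumes "a < u" "u < v" "0 < \<mu>" "\<mu> \<noteq> 1" "\<mu> * (u - a) < v - a" "u - a < \<mu> * (v - a)" "0 < s"
    and F: "\<forall>t\<in>{u..v}. F t = s * t + c" "s * u + c < b"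
    and h_a: "\<forall>t\<in>{a..v}. h t = a + \<mu> * (t - a)"
    and h_b: "\<forall>t\<in>{u..v}. h (F t) = b + \<rho> * (F t - b)"
    and comm: "\<And>t. F (h t) = h (F t)"
  shows False
proof -
  obtain t1 t2 where t: "t1 < t2" "\<forall>t\<in>{t1, t2}. u - a \<le> t \<and> t \<le> v - a \<and> u - a \<le> \<mu> * t \<and> \<mu> * t \<le> v - a"
    using two_points_mapped_into_interval[OF assms(3) _ assms(5,6)] assms(2) by auto
  have eq: "s * (a + \<mu> * t) + c = b + \<rho> * (s * (a + t) + c - b)" if "t \<in> {t1, t2}" for t
  proof -
    have range: "a + t \<in> {u..v}" "a + \<mu> * t \<in> {u..v}" using t(2) that by auto
    then have "h (a + t) = a + \<mu> * t" using h_a assms(1) by auto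
    then have "F (h (a + t)) = s * (a + \<mu> * t) + c" using F(1) range(2) by simp
    moreover have "h (F (a + t)) = b + \<rho> * (s * (a + t) + c - b)" using h_b F(1) range(1) by auto
    ultimately show ?thesis using comm by simp
  qed
  have "s * a + c = b"
    using affine_identity_at_two_points[OF _ assms(4) _ eq[of t1] eq[of t2]] assms(7) t(1) by auto
  moreover have "s * a < s * u" using assms(1,7) by simp
  ultimately show False using F(2) by simp
qed

section \<open>Discrete subgroups of the reals\<close>

lemma subgroup_int_multiple_mem:
  fixes S :: "'a::ring_1 set"
  assumes "0 \<in> S" "\<And>x y. x \<in> S \<Longrightarrow> y \<in> S \<Longrightarrow> x - y \<in> S" "g \<in> S"
  shows "of_int n * g \<in> S"
proof -
  have nat: "of_nat m * g \<in> S" for m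
  proof (induction m)
    case (Suc m)
    have "of_nat m * g - (0 - g) \<in> S" using assms Suc by blast
    then show ?case by (simp add: algebra_simps)
  qed (use assms in simp)
  show ?thesis
  proof (cases "n \<ge> 0")
    case True then show ?thesis using nat[of "nat n"] by simp
  next
    case False
    then have "0 - of_nat (nat (- n)) * g \<in> S" using assms(1,2) nat by blast
    then show ?thesis using False by simp
  qed
qed

lemma discrete_subgroup_least_positive:
  fixes S :: "real set"
  assumes "\<And>x y. x \<in> S \<Longrightarrow> y \<in> S \<Longrightarrow> x - y \<in> S" "\<gamma> > 0" "\<And>x. x \<in> S \<Longrightarrow> 0 < x \<Longrightarrow> \<gamma> \<le> x"
    and "x0 \<in> S" "0 < x0"
  obtains g where "g \<in> S" "0 < g" "\<And>x. x \<in> S \<Longrightarrow> 0 < x \<Longrightarrow> g \<le> x"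
proof -
  define Pos where "Pos = {x\<in>S. 0 < x}"
  have ne: "Pos \<noteq> {}" and bdd: "bdd_below Pos" unfolding Pos_def using assms(4,5) by (auto intro!: bdd_belowI[of _ 0])
  define g where "g = Inf Pos"
  have lower: "g \<le> x" if "x \<in> Pos" for x unfolding g_def using that bdd by (rule cInf_lower)
  have "\<gamma> \<le> g" unfolding g_def using ne assms(3) by (intro cInf_greatest) (auto simp: Pos_def)
  have "g \<in> Pos"
  proof (rule ccontr)
    assume "g \<notin> Pos"
    obtain t1 where t1: "t1 \<in> Pos" "t1 < g + \<gamma>" using cInf_lessD[OF ne, of "g + \<gamma>"] assms(2) unfolding g_def by auto
    then have "g < t1" using lower[OF t1(1)] \<open>g \<notin> Pos\<close> by (cases "g = t1") auto
    then obtain t2 where t2: "t2 \<in> Pos" "t2 < t1" using cInf_lessD[OF ne, of t1] unfolding g_def by auto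
    then have "t1 - t2 \<in> S" "0 < t1 - t2" "t1 - t2 < \<gamma>" using assms(1) t1 lower[OF t2(1)] unfolding Pos_def by auto
    then show False using assms(3) by fastforce
  qed
  then show ?thesis using that lower \<open>\<gamma> \<le> g\<close> assms(2) unfolding Pos_def by auto
qed

lemma discrete_real_subgroup_cyclic:
  fixes S :: "real set"
  assumes "0 \<in> S" "\<And>x y. x \<in> S \<Longrightarrow> y \<in> S \<Longrightarrow> x - y \<in> S" "\<gamma> > 0" "\<And>x. x \<in> S \<Longrightarrow> 0 < x \<Longrightarrow> \<gamma> \<le> x"
  shows "S = {0} \<or> (\<exists>g>0. S = range (\<lambda>n::int. of_int n * g))"
proof (cases "S \<subseteq> {0}")
  case False
  then obtain x where "x \<in> S" "x \<noteq> 0" by blast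
  then obtain x0 where "x0 \<in> S" "0 < x0" using assms(1) assms(2)[of 0 x] by (cases "0 < x") force+
  then obtain g where g: "g \<in> S" "0 < g" "\<And>x. x \<in> S \<Longrightarrow> 0 < x \<Longrightarrow> g \<le> x"
    using discrete_subgroup_least_positive[OF assms(2-4)] by blast
  have "x \<in> range (\<lambda>n::int. of_int n * g)" if "x \<in> S" for x
  proof -
    define n where "n = \<lfloor>x / g\<rfloor>"
    have "x - of_int n * g \<in> S" using assms(1,2) subgroup_int_multiple_mem[OF assms(1,2) g(1)] that by blast
    moreover have "of_int n \<le> x / g" "x / g < of_int n + 1" unfolding n_def by linarith+
    then have "0 \<le> x - of_int n * g" "x - of_int n * g < g"
      using g(2) by (simp_all add: pos_le_divide_eq pos_divide_less_eq algebra_simps)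
    ultimately have "x = of_int n * g" using g(3) by force
    then show ?thesis by blast
  qed
  then have "S = range (\<lambda>n::int. of_int n * g)"
    using subgroup_int_multiple_mem[OF assms(1,2) g(1)] by blast
  then show ?thesis using g(2) by blast
qed (use assms(1) in blast)

lemma infinite_cyclic_if_fst_multiples:
  fixes \<Gamma> :: "(real \<times> 'b::ab_group_add) set"
  assumes "inj_on fst \<Gamma>" "g > 0" "fst ` \<Gamma> = range (\<lambda>n::int. of_int n * g)"
  shows "\<exists>\<psi> :: real \<times> 'b \<Rightarrow> int. bij_betw \<psi> \<Gamma> UNIV \<and> (\<forall>x\<in>\<Gamma>. \<forall>y\<in>\<Gamma>. \<psi> (x + y) = \<psi> x + \<psi> y)"
proof -
  define \<psi> where "\<psi> x = \<lfloor>fst x / g\<rfloor>" for x :: "real \<times> 'b"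
  have fst_\<psi>: "fst x = of_int (\<psi> x) * g" if "x \<in> \<Gamma>" for x
  proof -
    have "fst x \<in> range (\<lambda>n::int. of_int n * g)" using assms(3) imageI[OF that, of fst] by simp
    then obtain n :: int where "fst x = of_int n * g" by blast
    moreover then have "\<psi> x = n" unfolding \<psi>_def using assms(2) by simp
    ultimately show ?thesis by simp
  qed
  have "inj_on \<psi> \<Gamma>"
  proof (rule inj_onI)
    fix x y assume "x \<in> \<Gamma>" "y \<in> \<Gamma>" "\<psi> x = \<psi> y"
    then have "fst x = fst y" using fst_\<psi> by simp
    then show "x = y" using inj_onD[OF assms(1)] \<open>x \<in> \<Gamma>\<close> \<open>y \<in> \<Gamma>\<close> by blast
  qed
  moreover have "n \<in> \<psi> ` \<Gamma>" for n :: int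
  proof -
    have "of_int n * g \<in> fst ` \<Gamma>" using assms(3) by blast
    then obtain x where "x \<in> \<Gamma>" "fst x = of_int n * g" by force
    then show ?thesis unfolding \<psi>_def using assms(2) by force
  qed
  moreover have "\<psi> (x + y) = \<psi> x + \<psi> y" if "x \<in> \<Gamma>" "y \<in> \<Gamma>" for x y
  proof -
    have "fst (x + y) = of_int (\<psi> x + \<psi> y) * g" using fst_\<psi> that by (simp add: distrib_right)
    then show ?thesis unfolding \<psi>_def using assms(2) by simp
  qed
  ultimately show ?thesis unfolding bij_betw_def by (intro exI[of _ \<psi>]) blast
qed

lemma subgroup_with_discrete_injective_fst:
  fixes \<Gamma> :: "(real \<times> 'b::ab_group_add) set"
  assumes "0 \<in> \<Gamma>" "\<And>x y. x \<in> \<Gamma> \<Longrightarrow> y \<in> \<Gamma> \<Longrightarrow> x - y \<in> \<Gamma>" "inj_on fst \<Gamma>"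
    and "\<gamma> > 0" "\<And>x. x \<in> \<Gamma> \<Longrightarrow> 0 < fst x \<Longrightarrow> \<gamma> \<le> fst x"
  shows "\<Gamma> = {0} \<or> (\<exists>\<psi> :: real \<times> 'b \<Rightarrow> int. bij_betw \<psi> \<Gamma> UNIV \<and> (\<forall>x\<in>\<Gamma>. \<forall>y\<in>\<Gamma>. \<psi> (x + y) = \<psi> x + \<psi> y))"
proof -
  have "0 \<in> fst ` \<Gamma>" using imageI[OF assms(1), of fst] by simp
  moreover have "x - y \<in> fst ` \<Gamma>" if xy: "x \<in> fst ` \<Gamma>" "y \<in> fst ` \<Gamma>" for x y
  proof -
    obtain x' y' where "x' \<in> \<Gamma>" "y' \<in> \<Gamma>" "x = fst x'" "y = fst y'" using xy by blast
    then show ?thesis using imageI[OF assms(2), of x' y' fst] by simp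
  qed
  moreover have "\<gamma> \<le> x" if "x \<in> fst ` \<Gamma>" "0 < x" for x
    using that assms(5) by auto
  ultimately have "fst ` \<Gamma> = {0} \<or> (\<exists>g>0. fst ` \<Gamma> = range (\<lambda>n::int. of_int n * g))"
    by (rule discrete_real_subgroup_cyclic[OF _ _ assms(4)])
  then show ?thesis
  proof
    assume "fst ` \<Gamma> = {0}"
    have "x = 0" if "x \<in> \<Gamma>" for x
    proof -
      have "fst x = fst 0" using that \<open>fst ` \<Gamma> = {0}\<close> by auto
      then show "x = 0" using inj_onD[OF assms(3)] that assms(1) by blast
    qed
    then show ?thesis using assms(1) by blast
  qed (use infinite_cyclic_if_fst_multiples[OF assms(3)] in blast)
qed

section \<open>Bumps and balanced groups\<close>

definition left_bump :: "(real \<Rightarrow> real) \<Rightarrow> real \<Rightarrow> real \<Rightarrow> real \<Rightarrow> bool" where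
  "left_bump k p p1 q \<longleftrightarrow> p < p1 \<and> {p<..<p1} \<subseteq> supp k \<and> supp k \<subseteq> {p<..<q}"

lemma left_bump_le: assumes "left_bump k p p1 q" shows "p1 \<le> q"
proof (rule ccontr)
  assume "\<not> p1 \<le> q"
  define x where "x = (max p q + p1) / 2"
  have "x \<in> {p<..<p1}" using assms \<open>\<not> p1 \<le> q\<close> unfolding x_def left_bump_def by auto
  then have "x \<in> {p<..<q}" using assms unfolding left_bump_def by blast
  then have "x < q" by simp
  then show False using \<open>\<not> p1 \<le> q\<close> unfolding x_def by auto
qed

lemma left_bump_conj_linear:
  assumes "PLo w" "linear_germ 1 a w L \<delta>" "0 < L" "a \<le> p" "q \<le> a + \<delta>" and bump: "left_bump k p p1 q"
  shows "left_bump (w \<circ> k \<circ> inv w) (a + L * (p - a)) (a + L * (p1 - a)) (a + L * (q - a))"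
proof -
  have w: "w y = a + L * (y - a)" if "y \<in> supp k" for y
    using assms(2,4,5) bump that unfolding linear_germ_right left_bump_def by force
  have S: "supp (w \<circ> k \<circ> inv w) = w ` supp k" using supp_conj[OF assms(1)] .
  have "{a + L * (p - a)<..<a + L * (p1 - a)} \<subseteq> w ` supp k"
  proof
    fix z assume z: "z \<in> {a + L * (p - a)<..<a + L * (p1 - a)}"
    define y where "y = a + (z - a) / L"
    have "L * (p - a) < z - a" "z - a < L * (p1 - a)" using z by auto
    then have "p - a < (z - a) / L" "(z - a) / L < p1 - a"
      using assms(3) by (simp_all add: pos_less_divide_eq pos_divide_less_eq mult.commute)
    then have "p < y" "y < p1" unfolding y_def by auto
    then have "y \<in> supp k" using bump unfolding left_bump_def by auto
    moreover have "z = w y" using w[OF \<open>y \<in> supp k\<close>] assms(3) unfolding y_def by simp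
    ultimately show "z \<in> w ` supp k" by blast
  qed
  moreover have "w ` supp k \<subseteq> {a + L * (p - a)<..<a + L * (q - a)}"
    using w bump assms(3) unfolding left_bump_def by auto
  moreover have "a + L * (p - a) < a + L * (p1 - a)" using bump assms(3) unfolding left_bump_def by simp
  ultimately show ?thesis unfolding left_bump_def S by blast
qed

text \<open>The elements supported in the union of the supports of \<open>C\<close> form a subgroup with an
  orbital from \<open>p\<close> to beyond \<open>P\<close>; the bump \<open>k\<close> realizes its left end but not its right end.\<close>

lemma balanced_left_bump_contra:
  assumes "balanced H" "PL_subgroup H" "C \<subseteq> H" "k \<in> C" "left_bump k p p1 q" "q < P"
    and cover: "{p<..<P} \<subseteq> (\<Union>g\<in>C. supp g)" "(\<Union>g\<in>C. supp g) \<subseteq> {p<..}"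
  shows False
proof -
  define V where "V = (\<Union>g\<in>C. supp g)"
  define G where "G = {g\<in>H. supp g \<subseteq> V}"
  have G: "PL_subgroup G" "G \<subseteq> H" unfolding G_def using PL_subgroup_supported_in[OF assms(2)] by auto
  have UG: "(\<Union>g\<in>G. supp g) = V" using assms(3) unfolding G_def V_def by blast
  define x0 where "x0 = (p + p1) / 2"
  have "p1 \<le> q" using left_bump_le[OF assms(5)] .
  then have x0: "x0 \<in> {p<..<P}" using assms(5,6) unfolding x0_def left_bump_def by auto
  define A where "A = connected_component_set V x0"
  have AG: "A \<in> group_orbitals G" unfolding group_orbitals_def A_def UG using x0 cover(1) V_def by blast
  have PA: "{p<..<P} \<subseteq> A" unfolding A_def V_def by (rule connected_component_maximal[OF x0 _ cover(1)]) simp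
  have AV: "A \<subseteq> V" unfolding A_def by (rule connected_component_subset)
  have "Inf A = p" using Inf_eq_left_endpoint[OF _ PA] AV cover(2) x0 unfolding V_def by auto
  moreover have "supp k \<subseteq> A"
  proof -
    have "supp k \<subseteq> {p<..<q}" using assms(5) unfolding left_bump_def by blast
    also have "\<dots> \<subseteq> {p<..<P}" using assms(6) by auto
    finally show ?thesis using PA by blast
  qed
  ultimately have "realizes k A (Inf A)"
    using realizes_left_endpoint AV cover(2) assms(5) unfolding left_bump_def V_def by auto
  moreover have "\<not> realizes k A (Sup A)"
  proof (rule not_realizes_right_of_supp)
    show "PLo k" using assms(2-4) unfolding PL_subgroup_def by blast
    show "supp k \<subseteq> {..<q}" using assms(5) unfolding left_bump_def by auto
    have "A \<subseteq> {0..1}" using AV supp_subset_unit unfolding V_def by blast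
    then have "bdd_above A" by (rule bdd_above_mono[OF bdd_above_Icc])
    then have "Sup {p<..<P} \<le> Sup A" using PA x0 by (intro cSup_subset_mono) auto
    then show "q < Sup A" using x0 assms(6) by simp
  qed
  moreover have "k \<in> G" using assms(3,4) unfolding G_def V_def by blast
  ultimately show False using assms(1) G AG unfolding balanced_def by blast
qed

section \<open>Balanced groups with a single orbital\<close>

locale balanced_single_orbital =
  fixes H :: "(real \<Rightarrow> real) set" and a b :: real
  assumes subgroup: "PL_subgroup H" and balanced: "balanced H"
    and orbitals: "group_orbitals H = {{a<..<b}}"
begin

lemma H_PLo: "h \<in> H \<Longrightarrow> PLo h"
  using subgroup unfolding PL_subgroup_def by blast

lemma H_comp: "f \<in> H \<Longrightarrow> g \<in> H \<Longrightarrow> g \<circ> f \<in> H"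
  using subgroup unfolding PL_subgroup_def by blast

lemma H_inv: "f \<in> H \<Longrightarrow> inv f \<in> H"
  using subgroup unfolding PL_subgroup_def by blast

lemma H_id: "id \<in> H"
  using subgroup unfolding PL_subgroup_def by blast

lemma H_funpow: "f \<in> H \<Longrightarrow> f ^^ n \<in> H"
  by (induction n) (auto simp: H_id H_comp)

lemma H_conj: "w \<in> H \<Longrightarrow> k \<in> H \<Longrightarrow> w \<circ> k \<circ> inv w \<in> H"
  by (simp add: H_comp H_inv)

lemma supports_eq: "(\<Union>h\<in>H. supp h) = {a<..<b}"
proof (rule equalityI)
  let ?U = "\<Union>h\<in>H. supp h"
  show "?U \<subseteq> {a<..<b}"
  proof
    fix y assume "y \<in> ?U"
    then have "connected_component_set ?U y \<in> group_orbitals H"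
      unfolding group_orbitals_def by blast
    then have "connected_component_set ?U y = {a<..<b}" using orbitals by simp
    moreover have "y \<in> connected_component_set ?U y" using \<open>y \<in> ?U\<close> by simp
    ultimately show "y \<in> {a<..<b}" by simp
  qed
  have "{a<..<b} \<in> group_orbitals H" using orbitals by simp
  then obtain x where "{a<..<b} = connected_component_set ?U x"
    unfolding group_orbitals_def by blast
  then show "{a<..<b} \<subseteq> ?U" using connected_component_subset[of ?U x] by simp
qed

lemma orbital_bounds: "a < b" "0 \<le> a" "b \<le> 1"
proof -
  have "{a<..<b} \<in> group_orbitals H" using orbitals by simp
  then obtain x where "x \<in> (\<Union>h\<in>H. supp h)" "{a<..<b} = connected_component_set (\<Union>h\<in>H. supp h) x"
    unfolding group_orbitals_def by blast
  then have "x \<in> {a<..<b}" by simp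
  then show "a < b" by simp
  have "{a<..<b} \<subseteq> {0..1}" using supports_eq supp_subset_unit by blast
  then have "closure {a<..<b} \<subseteq> {0..1}" by (simp add: closure_minimal)
  then show "0 \<le> a" "b \<le> 1" using \<open>a < b\<close> by auto
qed

lemma H_fixes_outside: assumes "h \<in> H" "x \<notin> {a<..<b}" shows "h x = x"
  using supports_eq assms PLo_fixes_off_supp[OF H_PLo[OF assms(1)], of x] by blast

lemma H_fixes_ends: "h \<in> H \<Longrightarrow> h a = a" "h \<in> H \<Longrightarrow> h b = b"
  by (simp_all add: H_fixes_outside)

lemma H_maps_orbital: assumes "h \<in> H" "a < x" "x < b" shows "a < h x" "h x < b"
  using PLo_less_iff[OF H_PLo[OF assms(1)], of a x] PLo_less_iff[OF H_PLo[OF assms(1)], of x b]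
    H_fixes_ends[OF assms(1)] assms(2,3) by auto

definition slope_a :: "(real \<Rightarrow> real) \<Rightarrow> real" where
  "slope_a h = right_deriv h a"

definition slope_b :: "(real \<Rightarrow> real) \<Rightarrow> real" where
  "slope_b h = left_deriv h b"

lemma slope_a_germ:
  assumes "h \<in> H"
  shows "slope_a h > 0 \<and> (\<exists>\<delta>>0. \<delta> < b - a \<and> linear_germ 1 a h (slope_a h) \<delta>)"
proof -
  have "a < 1" using orbital_bounds by linarith
  obtain \<delta> m where d: "\<delta> > 0" "a + \<delta> \<le> 1" "m > 0" "linear_germ 1 a h m \<delta>"
    by (rule PLo_linear_germ_right[OF H_PLo[OF assms] orbital_bounds(2) \<open>a < 1\<close> H_fixes_ends(1)[OF assms]])
  define \<delta>' where "\<delta>' = min \<delta> ((b - a) / 2)"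
  have \<delta>': "\<delta>' > 0" "\<delta>' < b - a" "\<delta>' \<le> \<delta>"
    using d(1) orbital_bounds(1) unfolding \<delta>'_def by (auto simp: min_less_iff_disj)
  have "slope_a h = m" unfolding slope_a_def using right_deriv_eqI[OF d(1,4)] .
  moreover have "linear_germ 1 a h m \<delta>'" using linear_germ_mono[OF d(4) \<delta>'(3)] .
  ultimately show ?thesis using d(3) \<delta>'(1,2) by auto
qed

lemma slope_b_germ:
  assumes "h \<in> H"
  shows "slope_b h > 0 \<and> (\<exists>\<delta>>0. \<delta> < b - a \<and> linear_germ (-1) b h (slope_b h) \<delta>)"
proof -
  have "0 < b" using orbital_bounds by linarith
  obtain \<delta> m where d: "\<delta> > 0" "0 \<le> b - \<delta>" "m > 0" "linear_germ (-1) b h m \<delta>"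
    by (rule PLo_linear_germ_left[OF H_PLo[OF assms] \<open>0 < b\<close> orbital_bounds(3) H_fixes_ends(2)[OF assms]])
  define \<delta>' where "\<delta>' = min \<delta> ((b - a) / 2)"
  have \<delta>': "\<delta>' > 0" "\<delta>' < b - a" "\<delta>' \<le> \<delta>"
    using d(1) orbital_bounds(1) unfolding \<delta>'_def by (auto simp: min_less_iff_disj)
  have "slope_b h = m" unfolding slope_b_def using left_deriv_eqI[OF d(1,4)] .
  moreover have "linear_germ (-1) b h m \<delta>'" using linear_germ_mono[OF d(4) \<delta>'(3)] .
  ultimately show ?thesis using d(3) \<delta>'(1,2) by auto
qed

lemma slope_a_pos: "h \<in> H \<Longrightarrow> slope_a h > 0"
  using slope_a_germ by blast

lemma slope_b_pos: "h \<in> H \<Longrightarrow> slope_b h > 0"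
  using slope_b_germ by blast

lemma slope_a_comp: assumes "f \<in> H" "g \<in> H" shows "slope_a (g \<circ> f) = slope_a f * slope_a g"
proof -
  obtain \<delta>f \<delta>g where f: "\<delta>f > 0" "linear_germ 1 a f (slope_a f) \<delta>f"
    and g: "\<delta>g > 0" "linear_germ 1 a g (slope_a g) \<delta>g"
    using slope_a_germ[OF assms(1)] slope_a_germ[OF assms(2)] by blast
  have "min \<delta>f (\<delta>g / slope_a f) > 0" using f(1) g(1) slope_a_pos[OF assms(1)] by simp
  moreover have "linear_germ 1 a (g \<circ> f) (slope_a f * slope_a g) (min \<delta>f (\<delta>g / slope_a f))"
    by (rule linear_germ_comp[OF slope_a_pos[OF assms(1)] f(2) g(2)])
  ultimately show ?thesis unfolding slope_a_def by (rule right_deriv_eqI)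
qed

lemma slope_b_comp: assumes "f \<in> H" "g \<in> H" shows "slope_b (g \<circ> f) = slope_b f * slope_b g"
proof -
  obtain \<delta>f \<delta>g where f: "\<delta>f > 0" "linear_germ (-1) b f (slope_b f) \<delta>f"
    and g: "\<delta>g > 0" "linear_germ (-1) b g (slope_b g) \<delta>g"
    using slope_b_germ[OF assms(1)] slope_b_germ[OF assms(2)] by blast
  have "min \<delta>f (\<delta>g / slope_b f) > 0" using f(1) g(1) slope_b_pos[OF assms(1)] by simp
  moreover have "linear_germ (-1) b (g \<circ> f) (slope_b f * slope_b g) (min \<delta>f (\<delta>g / slope_b f))"
    by (rule linear_germ_comp[OF slope_b_pos[OF assms(1)] f(2) g(2)])
  ultimately show ?thesis unfolding slope_b_def by (rule left_deriv_eqI)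
qed

lemma slope_a_id: "slope_a id = 1"
  unfolding slope_a_def using right_deriv_eqI[OF _ linear_germ_id, of 1] by simp

lemma slope_b_id: "slope_b id = 1"
  unfolding slope_b_def using left_deriv_eqI[OF _ linear_germ_id, of 1] by simp

lemma slope_a_inv: assumes "h \<in> H" shows "slope_a (inv h) = 1 / slope_a h"
proof -
  have "slope_a h * slope_a (inv h) = 1"
    using slope_a_comp[OF assms H_inv[OF assms]] PLo_inv_comp[OF H_PLo[OF assms]] slope_a_id by simp
  then show ?thesis using slope_a_pos[OF assms] by (simp add: field_simps)
qed

lemma slope_b_inv: assumes "h \<in> H" shows "slope_b (inv h) = 1 / slope_b h"
proof -
  have "slope_b h * slope_b (inv h) = 1"
    using slope_b_comp[OF assms H_inv[OF assms]] PLo_inv_comp[OF H_PLo[OF assms]] slope_b_id by simp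
  then show ?thesis using slope_b_pos[OF assms] by (simp add: field_simps)
qed

lemma supp_subset_orbital: "h \<in> H \<Longrightarrow> supp h \<subseteq> {a<..<b}"
  using supports_eq by blast

lemma realizes_a_iff: assumes "h \<in> H" shows "realizes h {a<..<b} a \<longleftrightarrow> slope_a h \<noteq> 1"
proof -
  obtain \<delta> where d: "\<delta> > 0" "\<delta> < b - a" "\<forall>x\<in>{a..a+\<delta>}. h x = a + slope_a h * (x - a)"
    using slope_a_germ[OF assms] unfolding linear_germ_right by blast
  show ?thesis
  proof
    assume "realizes h {a<..<b} a"
    moreover have "h x = x" if "slope_a h = 1" "x \<in> ball a \<delta>" for x
      using d(3) that H_fixes_outside[OF assms, of x] by (cases "a \<le> x") (auto simp: dist_real_def)
    ultimately show "slope_a h \<noteq> 1" using not_realizes_if_fixes_ball[OF d(1)] by blast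
  next
    assume "slope_a h \<noteq> 1"
    have "{a<..<a+\<delta>} \<subseteq> supp h"
    proof
      fix x assume x: "x \<in> {a<..<a+\<delta>}"
      then have "h x - x = (slope_a h - 1) * (x - a)" using d(3) by (auto simp: algebra_simps)
      then have "h x \<noteq> x" using x \<open>slope_a h \<noteq> 1\<close> by auto
      then show "x \<in> supp h" using x d(2) orbital_bounds unfolding supp_def by auto
    qed
    then show "realizes h {a<..<b} a"
      by (intro realizes_left_endpoint[of a "a + \<delta>"]) (use d(1) supp_subset_orbital[OF assms] in auto)
  qed
qed

lemma realizes_b_iff: assumes "h \<in> H" shows "realizes h {a<..<b} b \<longleftrightarrow> slope_b h \<noteq> 1"
proof -
  obtain \<delta> where d: "\<delta> > 0" "\<delta> < b - a" "\<forall>x\<in>{b-\<delta>..b}. h x = b + slope_b h * (x - b)"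
    using slope_b_germ[OF assms] unfolding linear_germ_left by blast
  show ?thesis
  proof
    assume "realizes h {a<..<b} b"
    moreover have "h x = x" if "slope_b h = 1" "x \<in> ball b \<delta>" for x
      using d(3) that H_fixes_outside[OF assms, of x] by (cases "x \<le> b") (auto simp: dist_real_def)
    ultimately show "slope_b h \<noteq> 1" using not_realizes_if_fixes_ball[OF d(1)] by blast
  next
    assume "slope_b h \<noteq> 1"
    have "{b-\<delta><..<b} \<subseteq> supp h"
    proof
      fix x assume x: "x \<in> {b-\<delta><..<b}"
      then have "h x - x = (slope_b h - 1) * (x - b)" using d(3) by (auto simp: algebra_simps)
      then have "h x \<noteq> x" using x \<open>slope_b h \<noteq> 1\<close> by auto
      then show "x \<in> supp h" using x d(2) orbital_bounds unfolding supp_def by auto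
    qed
    then show "realizes h {a<..<b} b"
      by (intro realizes_right_endpoint[of "b - \<delta>"]) (use d(1) supp_subset_orbital[OF assms] in auto)
  qed
qed

lemma slope_a_eq_1_iff: assumes "h \<in> H" shows "slope_a h = 1 \<longleftrightarrow> slope_b h = 1"
proof -
  have "realizes h {a<..<b} (Inf {a<..<b}) \<longleftrightarrow> realizes h {a<..<b} (Sup {a<..<b})"
    using balanced subgroup orbitals assms unfolding balanced_def by blast
  then show ?thesis using realizes_a_iff[OF assms] realizes_b_iff[OF assms] orbital_bounds(1) by simp
qed

lemma moves_point_down: assumes "a < s" "s < b" shows "\<exists>g\<in>H. g s < s"
proof -
  have "s \<in> (\<Union>h\<in>H. supp h)" using supports_eq assms by simp
  then obtain g where g: "g \<in> H" "s \<in> supp g" by blast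
  show ?thesis
  proof (cases "g s < s")
    case False
    then have "s < g s" using g(2) unfolding supp_def by auto
    then have "inv g s < s" using PLo_less_iff[OF H_PLo[OF g(1)], of "inv g s" s] H_PLo[OF g(1)] by simp
    then show ?thesis using H_inv[OF g(1)] by blast
  qed (use g in blast)
qed

text \<open>The infimum of an orbit inside \<open>(a, b)\<close> would be moved down by some element, and by
  continuity so would the orbit points near it.\<close>

lemma orbit_below: assumes "a < x" "x < b" "a < y" "y < b" shows "\<exists>u\<in>H. u x < y"
proof (rule ccontr)
  assume "\<not> (\<exists>u\<in>H. u x < y)"
  define Orb where "Orb = (\<lambda>u. u x) ` H"
  have "x \<in> Orb" unfolding Orb_def using rev_image_eqI[OF H_id, of x "\<lambda>u. u x"] by simp
  have "y \<le> z" if "z \<in> Orb" for z using that \<open>\<not> (\<exists>u\<in>H. u x < y)\<close> unfolding Orb_def by auto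
  then have bdd: "bdd_below Orb" by (rule bdd_belowI)
  define s where "s = Inf Orb"
  have lower: "s \<le> z" if "z \<in> Orb" for z unfolding s_def using that bdd by (rule cInf_lower)
  have "y \<le> s" unfolding s_def using \<open>x \<in> Orb\<close> \<open>\<And>z. z \<in> Orb \<Longrightarrow> y \<le> z\<close> by (intro cInf_greatest) auto
  moreover have "s \<le> x" using lower[OF \<open>x \<in> Orb\<close>] .
  ultimately have s: "a < s" "s < b" using assms by auto
  then obtain g where g: "g \<in> H" "g s < s" using moves_point_down by blast
  have "isCont g s" using PLo_isCont[OF H_PLo[OF g(1)]] s orbital_bounds by auto
  then have "eventually (\<lambda>z. g z < s) (at s)" using order_tendstoD(2) g(2) unfolding isCont_def by blast
  then obtain \<eta> where \<eta>: "\<eta> > 0" "\<And>z. z \<noteq> s \<Longrightarrow> dist z s < \<eta> \<Longrightarrow> g z < s"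
    unfolding eventually_at by auto
  obtain z where z: "z \<in> Orb" "z < s + \<eta>" using cInf_lessD[of Orb "s + \<eta>"] \<open>x \<in> Orb\<close> \<eta>(1) unfolding s_def by auto
  then have "g z < s" using \<eta>(2)[of z] lower[OF z(1)] g(2) by (cases "z = s") (auto simp: dist_real_def)
  moreover have "g z \<in> Orb"
  proof -
    obtain u where "u \<in> H" "z = u x" using z(1) unfolding Orb_def by blast
    then show ?thesis unfolding Orb_def using rev_image_eqI[OF H_comp[OF _ g(1)], of u "g z" "\<lambda>u. u x"] by simp
  qed
  ultimately show False using lower by fastforce
qed

lemma orbit_above: assumes "a < x" "x < b" "a < y" "y < b" shows "\<exists>u\<in>H. y < u x"
proof -
  obtain u where u: "u \<in> H" "u y < x" using orbit_below[OF assms(3,4,1,2)] by blast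
  then have "y < inv u x" using PLo_less_iff[OF H_PLo[OF u(1)], of y "inv u x"] H_PLo[OF u(1)] by simp
  then show ?thesis using H_inv[OF u(1)] by blast
qed

definition slope_a_accumulates :: bool where
  "slope_a_accumulates \<longleftrightarrow> (\<forall>r>1. \<exists>h\<in>H. 1 < slope_a h \<and> slope_a h < r)"

lemma slope_a_below_one:
  assumes "slope_a_accumulates"
  obtains f where "f \<in> H" "0 < slope_a f" "slope_a f < 1"
proof -
  obtain h where "h \<in> H" "1 < slope_a h"
    using assms[unfolded slope_a_accumulates_def, rule_format, of 2] by auto
  then show ?thesis using that[of "inv h"] H_inv slope_a_inv by simp
qed

lemma supp_inside_if_slopes_one:
  assumes "k \<in> H" "slope_a k = 1" "slope_b k = 1"
  obtains c d where "a < c" "d < b" "supp k \<subseteq> {c<..<d}"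
proof -
  obtain \<delta>1 where d1: "\<delta>1 > 0" "\<forall>x\<in>{a..a+\<delta>1}. k x = a + (x - a)"
    using slope_a_germ[OF assms(1)] assms(2) unfolding linear_germ_right by auto
  obtain \<delta>2 where d2: "\<delta>2 > 0" "\<forall>x\<in>{b-\<delta>2..b}. k x = b + (x - b)"
    using slope_b_germ[OF assms(1)] assms(3) unfolding linear_germ_left by auto
  have "supp k \<subseteq> {a+\<delta>1<..<b-\<delta>2}"
  proof
    fix y assume y: "y \<in> supp k"
    then have "y \<in> {a<..<b}" "k y \<noteq> y" using supp_subset_orbital[OF assms(1)] unfolding supp_def by auto
    then show "y \<in> {a+\<delta>1<..<b-\<delta>2}" using d1(2) d2(2) by (cases "y \<le> a + \<delta>1"; cases "b - \<delta>2 \<le> y") auto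
  qed
  then show ?thesis using that[of "a + \<delta>1" "b - \<delta>2"] d1(1) d2(1) by simp
qed

lemma left_bump_near_a:
  assumes "k \<in> H" "k \<noteq> id" "slope_a k = 1" "slope_b k = 1" "a < e" "e < b"
  obtains k1 p p1 q where "k1 \<in> H" "a < p" "q < e" "left_bump k1 p p1 q"
proof -
  obtain c d where cd: "a < c" "d < b" "supp k \<subseteq> {c<..<d}"
    using supp_inside_if_slopes_one[OF assms(1,3,4)] by blast
  obtain x where "k x \<noteq> x" using assms(2) by (auto simp: fun_eq_iff)
  then have "x \<in> supp k" using PLo_fixes_outside[OF H_PLo[OF assms(1)]] unfolding supp_def by blast
  then have "c < d" using cd(3) by auto
  obtain u where u: "u \<in> H" "u d < e" using orbit_below[of d e] cd \<open>c < d\<close> assms(5,6) by auto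
  define k1 where "k1 = u \<circ> k \<circ> inv u"
  have "k1 \<in> H" unfolding k1_def using H_conj[OF u(1) assms(1)] .
  have S: "supp k1 = u ` supp k" unfolding k1_def by (rule supp_conj[OF H_PLo[OF u(1)]])
  have Ssub: "supp k1 \<subseteq> {u c<..<u d}"
    using S cd(3) PLo_less_iff[OF H_PLo[OF u(1)]] by fastforce
  have "supp k1 \<noteq> {}" using S \<open>x \<in> supp k\<close> by blast
  then obtain p1 where p1: "Inf (supp k1) < p1" "{Inf (supp k1)<..<p1} \<subseteq> supp k1" "supp k1 \<subseteq> {Inf (supp k1)<..}"
    using PLo_supp_starts_with_interval[OF H_PLo[OF \<open>k1 \<in> H\<close>]] by blast
  have "u c \<le> Inf (supp k1)" using \<open>supp k1 \<noteq> {}\<close> Ssub by (intro cInf_greatest) auto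
  moreover have "a < u c" using H_maps_orbital(1)[OF u(1) cd(1)] cd(2) \<open>c < d\<close> by simp
  ultimately have "a < Inf (supp k1)" by linarith
  have "supp k1 \<subseteq> {Inf (supp k1)<..<u d}"
  proof
    fix y assume "y \<in> supp k1"
    then show "y \<in> {Inf (supp k1)<..<u d}" using subsetD[OF p1(3)] subsetD[OF Ssub] by force
  qed
  then have "left_bump k1 (Inf (supp k1)) p1 (u d)" unfolding left_bump_def using p1(1,2) by blast
  then show ?thesis using that \<open>k1 \<in> H\<close> \<open>a < Inf (supp k1)\<close> u(2) by blast
qed

lemma left_bump_shrink:
  assumes "f \<in> H" "0 < slope_a f" "slope_a f < 1" "linear_germ 1 a f (slope_a f) \<epsilon>"
    and "k \<in> H" "left_bump k p p1 q" "a \<le> p" "q \<le> a + \<epsilon>" "D > 0"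
  obtains L k' where "0 < L" "L < D" "k' \<in> H" "left_bump k' (a + L * (p - a)) (a + L * (p1 - a)) (a + L * (q - a))"
proof -
  define \<theta> where "\<theta> = slope_a f"
  obtain m where "\<theta> ^ m < D" using real_arch_pow_inv[OF assms(9)] assms(3) unfolding \<theta>_def by blast
  have "linear_germ 1 a (f ^^ m) (\<theta> ^ m) \<epsilon>"
    unfolding linear_germ_def
  proof
    fix t assume t: "t \<in> {0..\<epsilon>}"
    have "\<theta> ^ i * t \<le> \<epsilon>" for i
      using t assms(2,3) mult_left_le_one_le[of t "\<theta> ^ i"] power_le_one[of \<theta> i] unfolding \<theta>_def by auto
    then show "(f ^^ m) (a + 1 * t) = a + 1 * (\<theta> ^ m * t)"
      using linear_germ_funpow[of \<theta> 1 a f \<epsilon> t m] assms(2,4) t unfolding \<theta>_def by auto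
  qed
  then have "left_bump ((f ^^ m) \<circ> k \<circ> inv (f ^^ m)) (a + \<theta> ^ m * (p - a)) (a + \<theta> ^ m * (p1 - a)) (a + \<theta> ^ m * (q - a))"
    using left_bump_conj_linear[OF H_PLo[OF H_funpow[OF assms(1)]] _ _ assms(7,8,6)] assms(2) unfolding \<theta>_def by simp
  moreover have "0 < \<theta> ^ m" using assms(2) unfolding \<theta>_def by simp
  ultimately show ?thesis using that \<open>\<theta> ^ m < D\<close> H_conj[OF H_funpow[OF assms(1)] assms(5)] by blast
qed

lemma left_bump_conj_funpow:
  assumes "w \<in> H" "1 \<le> \<mu>" "linear_germ 1 a w \<mu> \<delta>" "left_bump k p p1 q" "a \<le> p"
    and "\<mu> ^ J * (q - a) \<le> \<delta>" "j \<le> J"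
  shows "left_bump ((w ^^ j) \<circ> k \<circ> inv (w ^^ j))
    (a + \<mu> ^ j * (p - a)) (a + \<mu> ^ j * (p1 - a)) (a + \<mu> ^ j * (q - a))"
proof -
  have "linear_germ 1 a (w ^^ j) (\<mu> ^ j) (q - a)"
    unfolding linear_germ_def
  proof
    fix t assume t: "t \<in> {0..q - a}"
    have "\<mu> ^ i * t \<le> \<delta>" if "i < j" for i
    proof -
      have "\<mu> ^ i * t \<le> \<mu> ^ J * (q - a)"
        using t assms(2,7) \<open>i < j\<close> by (intro mult_mono power_increasing) auto
      then show ?thesis using assms(6) by linarith
    qed
    then show "(w ^^ j) (a + 1 * t) = a + 1 * (\<mu> ^ j * t)"
      using linear_germ_funpow[of \<mu> 1 a w \<delta> t j] assms(2,3) t by auto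
  qed
  moreover have "q \<le> a + (q - a)" by simp
  ultimately show ?thesis
    using left_bump_conj_linear[OF H_PLo[OF H_funpow[OF assms(1)]] _ _ assms(5) _ assms(4)] assms(2) by simp
qed

text \<open>Conjugating the bump by the powers \<open>w\<^sup>j\<close> of an element of slope \<open>\<mu>\<close> slightly above 1
  produces a chain of overlapping bumps, all starting to the right of \<open>p\<close>, whose union reaches
  beyond \<open>q\<close>.\<close>

lemma conjugate_chain_contra:
  assumes "w \<in> H" "1 < \<mu>" "linear_germ 1 a w \<mu> \<delta>" "k \<in> H" "left_bump k p p1 q" "a < p"
    and "\<mu> * (p - a) < p1 - a" "q - a < \<mu> ^ J * (p1 - a)" "\<mu> ^ J * (q - a) \<le> \<delta>"
  shows False
proof -
  define c where "c j = (w ^^ j) \<circ> k \<circ> inv (w ^^ j)" for j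
  have bump: "left_bump (c j) (a + \<mu> ^ j * (p - a)) (a + \<mu> ^ j * (p1 - a)) (a + \<mu> ^ j * (q - a))"
    if "j \<le> J" for j
    unfolding c_def using left_bump_conj_funpow[OF assms(1) _ assms(3,5) _ assms(9) that] assms(2,6) by simp
  define C where "C = c ` {..J}"
  have "c j \<in> H" for j unfolding c_def using H_conj[OF H_funpow[OF assms(1)] assms(4)] .
  then have "C \<subseteq> H" unfolding C_def by blast
  moreover have "c 0 \<in> C" unfolding C_def by simp
  then have "k \<in> C" unfolding c_def by simp
  moreover have "q < a + \<mu> ^ J * (p1 - a)" using assms(8) by simp
  moreover have "{p<..<a + \<mu> ^ J * (p1 - a)} \<subseteq> (\<Union>g\<in>C. supp g)"
  proof -
    have "{p<..<a + \<mu> ^ J * (p1 - a)} \<subseteq> (\<Union>j\<le>J. {a + \<mu> ^ j * (p - a)<..<a + \<mu> ^ j * (p1 - a)})"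
      using scaled_intervals_cover[of \<mu> p a p1 J] assms(2,7) by simp
    also have "\<dots> \<subseteq> (\<Union>g\<in>C. supp g)"
    proof
      fix z assume "z \<in> (\<Union>j\<le>J. {a + \<mu> ^ j * (p - a)<..<a + \<mu> ^ j * (p1 - a)})"
      then obtain j where "j \<le> J" "z \<in> {a + \<mu> ^ j * (p - a)<..<a + \<mu> ^ j * (p1 - a)}" by blast
      then have "z \<in> supp (c j)" using bump[OF \<open>j \<le> J\<close>] unfolding left_bump_def by blast
      then show "z \<in> (\<Union>g\<in>C. supp g)" unfolding C_def using \<open>j \<le> J\<close> by blast
    qed
    finally show ?thesis .
  qed
  moreover have "supp (c j) \<subseteq> {p<..}" if "j \<le> J" for j
  proof -
    have "1 * (p - a) \<le> \<mu> ^ j * (p - a)" by (rule mult_right_mono) (use assms(2,6) in simp_all)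
    then have "{a + \<mu> ^ j * (p - a)<..<a + \<mu> ^ j * (q - a)} \<subseteq> {p<..}" by auto
    then show ?thesis using bump[OF that] unfolding left_bump_def by blast
  qed
  then have "(\<Union>g\<in>C. supp g) \<subseteq> {p<..}" unfolding C_def by blast
  ultimately show False by (rule balanced_left_bump_contra[OF balanced subgroup _ _ assms(5)])
qed

lemma slope_a_faithful_if_accumulates:
  assumes "slope_a_accumulates" "k \<in> H" "slope_a k = 1"
  shows "k = id"
proof (rule ccontr)
  assume "k \<noteq> id"
  obtain f where f: "f \<in> H" "0 < slope_a f" "slope_a f < 1" using slope_a_below_one[OF assms(1)] .
  obtain \<epsilon> where \<epsilon>: "\<epsilon> > 0" "\<epsilon> < b - a" "linear_germ 1 a f (slope_a f) \<epsilon>" using slope_a_germ[OF f(1)] by blast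
  have "slope_b k = 1" using slope_a_eq_1_iff[OF assms(2)] assms(3) by simp
  obtain k1 p p1 q where k1: "k1 \<in> H" "a < p" "q < a + \<epsilon>" "left_bump k1 p p1 q"
    by (rule left_bump_near_a[OF assms(2) \<open>k \<noteq> id\<close> assms(3) \<open>slope_b k = 1\<close>, of "a + \<epsilon>"])
      (use \<epsilon>(1,2) in auto)
  have "p < p1" using k1(4) unfolding left_bump_def by blast
  have "p1 \<le> q" using left_bump_le[OF k1(4)] .
  have "1 < (p1 - a) / (p - a)" using \<open>p < p1\<close> k1(2) by simp
  then obtain w where w: "w \<in> H" "1 < slope_a w" "slope_a w < (p1 - a) / (p - a)"
    using assms(1)[unfolded slope_a_accumulates_def, rule_format] by blast
  define \<mu> where "\<mu> = slope_a w"
  obtain \<delta> where \<delta>: "\<delta> > 0" "linear_germ 1 a w \<mu> \<delta>" using slope_a_germ[OF w(1)] unfolding \<mu>_def by blast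
  have \<mu>: "1 < \<mu>" "\<mu> * (p - a) < p1 - a" using w k1(2) unfolding \<mu>_def by (simp_all add: pos_less_divide_eq)
  obtain J where "(q - a) / (p1 - a) < \<mu> ^ J" using real_arch_pow[OF \<mu>(1)] by blast
  then have J: "q - a < \<mu> ^ J * (p1 - a)" using \<open>p < p1\<close> k1(2) by (simp add: pos_divide_less_eq)
  have "0 < \<mu> ^ J * (q - a)" using \<mu>(1) \<open>p < p1\<close> \<open>p1 \<le> q\<close> k1(2) by simp
  then obtain L k2 where L: "0 < L" "L < \<delta> / (\<mu> ^ J * (q - a))" "k2 \<in> H"
      "left_bump k2 (a + L * (p - a)) (a + L * (p1 - a)) (a + L * (q - a))"
    using left_bump_shrink[OF f \<epsilon>(3) k1(1,4) _ _, of "\<delta> / (\<mu> ^ J * (q - a))"] k1(2,3) \<delta>(1) by auto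
  show False
  proof (rule conjugate_chain_contra[OF w(1) \<mu>(1) \<delta>(2) L(3,4)])
    show "a < a + L * (p - a)" using L(1) k1(2) by simp
    show "\<mu> * (a + L * (p - a) - a) < a + L * (p1 - a) - a" using \<mu>(2) L(1) by (simp add: mult.left_commute)
    show "a + L * (q - a) - a < \<mu> ^ J * (a + L * (p1 - a) - a)" using J L(1) by (simp add: mult.left_commute)
    show "\<mu> ^ J * (a + L * (q - a) - a) \<le> \<delta>"
      using L(2) \<open>0 < \<mu> ^ J * (q - a)\<close> by (simp add: pos_less_divide_eq mult.left_commute mult.commute)
  qed
qed

lemma commute_if_slope_a_faithful:
  assumes trivial: "\<And>k. k \<in> H \<Longrightarrow> slope_a k = 1 \<Longrightarrow> k = id" and "f \<in> H" "g \<in> H"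
  shows "f \<circ> g = g \<circ> f"
proof -
  have gf: "g \<circ> f \<in> H" and fg: "f \<circ> g \<in> H" using H_comp assms(2,3) by auto
  define x where "x = (f \<circ> g) \<circ> inv (g \<circ> f)"
  have "x \<in> H" unfolding x_def using H_comp[OF H_inv[OF gf] fg] .
  have "slope_a x = slope_a (inv (g \<circ> f)) * slope_a (f \<circ> g)"
    unfolding x_def using slope_a_comp[OF H_inv[OF gf] fg] .
  also have "\<dots> = 1"
    using slope_a_inv[OF gf] slope_a_comp[OF assms(2,3)] slope_a_comp[OF assms(3,2)]
      slope_a_pos[OF assms(2)] slope_a_pos[OF assms(3)] by simp
  finally have "x = id" using trivial \<open>x \<in> H\<close> by blast
  then have "x \<circ> (g \<circ> f) = g \<circ> f" by simp
  moreover have "x \<circ> (g \<circ> f) = f \<circ> g"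
    unfolding x_def using PLo_inv_comp[OF H_PLo[OF gf]] by (simp add: comp_assoc)
  ultimately show ?thesis by simp
qed

lemma slope_b_above_one:
  assumes "h \<in> H" "slope_b h \<noteq> 1"
  obtains g where "g \<in> H" "1 < slope_b g"
proof (cases "1 < slope_b h")
  case False
  then have "1 < slope_b (inv h)" using assms slope_b_inv slope_b_pos[OF assms(1)] by simp
  then show ?thesis using that H_inv[OF assms(1)] by blast
qed (use that assms in blast)

lemma small_slope_a_bounded_slope_b:
  assumes "slope_a_accumulates" "1 < r" "1 < \<kappa>"
  obtains h where "h \<in> H" "slope_a h \<noteq> 1" "slope_a h < r" "1 / slope_a h < r" "slope_b h \<le> \<kappa>"
proof -
  obtain h where h: "h \<in> H" "1 < slope_a h" "slope_a h < r"
    using assms(1,2) unfolding slope_a_accumulates_def by blast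
  show ?thesis
  proof (cases "slope_b h \<le> \<kappa>")
    case True
    moreover have "1 / slope_a h < r" using h(2) assms(2) by (smt (verit) divide_less_eq_1)
    ultimately show ?thesis using that h by simp
  next
    case False
    then have "1 < slope_b h" using assms(3) by simp
    then have "1 / slope_b h < 1" by simp
    then have "slope_b (inv h) \<le> \<kappa>" using slope_b_inv[OF h(1)] assms(3) by simp
    moreover have "1 / slope_a h < r" using h(2) assms(2) by (smt (verit) divide_less_eq_1)
    ultimately show ?thesis using that[of "inv h"] H_inv[OF h(1)] slope_a_inv[OF h(1)] h(2,3) by simp
  qed
qed

lemma abelian_linear_on_germs:
  assumes comm: "\<And>f g. f \<in> H \<Longrightarrow> g \<in> H \<Longrightarrow> f \<circ> g = g \<circ> f"
    and f: "f \<in> H" "1 < slope_a f" "linear_germ 1 a f (slope_a f) \<epsilon>"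
    and g: "g \<in> H" "1 < slope_b g" "linear_germ (-1) b g (slope_b g) \<epsilon>'"
    and h: "h \<in> H" "slope_a h \<le> slope_a f" "slope_b h \<le> slope_b g"
  shows "linear_germ 1 a h (slope_a h) \<epsilon>" "linear_germ (-1) b h (slope_b h) \<epsilon>'"
proof -
  have pointwise: "\<And>y. h (k y) = k (h y)" if "k \<in> H" for k
    using comm[OF h(1) that] by (metis comp_apply)
  obtain \<delta> \<delta>' where ha: "\<delta> > 0" "linear_germ 1 a h (slope_a h) \<delta>"
    and hb: "\<delta>' > 0" "linear_germ (-1) b h (slope_b h) \<delta>'"
    using slope_a_germ[OF h(1)] slope_b_germ[OF h(1)] by blast
  show "linear_germ 1 a h (slope_a h) \<epsilon>"
    by (rule linear_germ_extend_commuting[OF f(2,3) ha slope_a_pos[OF h(1)] h(2) pointwise[OF f(1)]])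
  show "linear_germ (-1) b h (slope_b h) \<epsilon>'"
    by (rule linear_germ_extend_commuting[OF g(2,3) hb slope_b_pos[OF h(1)] h(3) pointwise[OF g(1)]])
qed

lemma affine_transfer_near_ends:
  assumes "0 < \<epsilon>" "\<epsilon> < b - a" "0 < \<epsilon>'" "\<epsilon>' < b - a"
  obtains F u v s c where "F \<in> H" "a < u" "u < v" "v \<le> a + \<epsilon>" "0 < s"
    "\<forall>t\<in>{u..v}. F t = s * t + c" "\<forall>t\<in>{u..v}. b - \<epsilon>' < F t \<and> F t < b"
proof -
  define u where "u = a + \<epsilon> / 2"
  have u: "a < u" "u < a + \<epsilon>" "u < b" using assms(1,2) unfolding u_def by auto
  obtain F where F: "F \<in> H" "b - \<epsilon>' < F u" using orbit_above[of u "b - \<epsilon>'"] u assms(3,4) by auto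
  have "0 \<le> u" "u < 1" using u orbital_bounds by auto
  then obtain \<delta> s c where Fa: "\<delta> > 0" "u + \<delta> \<le> 1" "s > 0" "\<forall>x\<in>{u..u+\<delta>}. F x = s * x + c"
    by (rule PLo_affine_right[OF H_PLo[OF F(1)]])
  define v where "v = min (u + \<delta>) (a + \<epsilon>)"
  have v: "u < v" "v \<le> u + \<delta>" "v \<le> a + \<epsilon>" "v < b" using Fa(1) u assms(2) unfolding v_def by auto
  have "b - \<epsilon>' < F t \<and> F t < b" if "t \<in> {u..v}" for t
    using F(2) PLo_le_iff[OF H_PLo[OF F(1)], of u t] H_maps_orbital(2)[OF F(1), of t] that u v by auto
  then show ?thesis using that[OF F(1) u(1) v(1,3) Fa(3)] Fa(4) v(2) by auto
qed

lemma abelian_slope_a_not_accumulates: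
  assumes comm: "\<And>f g. f \<in> H \<Longrightarrow> g \<in> H \<Longrightarrow> f \<circ> g = g \<circ> f"
  shows "\<not> slope_a_accumulates"
proof
  assume acc: "slope_a_accumulates"
  obtain f where f: "f \<in> H" "1 < slope_a f"
    using acc[unfolded slope_a_accumulates_def, rule_format, of 2] by auto
  obtain \<epsilon> where \<epsilon>: "0 < \<epsilon>" "\<epsilon> < b - a" "linear_germ 1 a f (slope_a f) \<epsilon>" using slope_a_germ[OF f(1)] by blast
  obtain g where g: "g \<in> H" "1 < slope_b g"
    using slope_b_above_one[OF f(1)] slope_a_eq_1_iff[OF f(1)] f(2) by auto
  obtain \<epsilon>' where \<epsilon>': "0 < \<epsilon>'" "\<epsilon>' < b - a" "linear_germ (-1) b g (slope_b g) \<epsilon>'" using slope_b_germ[OF g(1)] by blast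
  obtain F u v s c where F: "F \<in> H" "a < u" "u < v" "v \<le> a + \<epsilon>" "0 < s"
      "\<forall>t\<in>{u..v}. F t = s * t + c" "\<forall>t\<in>{u..v}. b - \<epsilon>' < F t \<and> F t < b"
    by (rule affine_transfer_near_ends[OF \<epsilon>(1,2) \<epsilon>'(1,2)])
  define r where "r = min ((v - a) / (u - a)) (slope_a f)"
  have "1 < r" unfolding r_def using F(2,3) f(2) by simp
  then obtain h where h: "h \<in> H" "slope_a h \<noteq> 1" "slope_a h < r" "1 / slope_a h < r" "slope_b h \<le> slope_b g"
    using small_slope_a_bounded_slope_b[OF acc _ g(2)] by blast
  have lin: "linear_germ 1 a h (slope_a h) \<epsilon>" "linear_germ (-1) b h (slope_b h) \<epsilon>'"
    using abelian_linear_on_germs[OF comm f \<epsilon>(3) g \<epsilon>'(3) h(1) _ h(5)] h(3) unfolding r_def by auto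
  have "0 < slope_a h" using slope_a_pos[OF h(1)] .
  show False
  proof (rule commuting_affine_transfer_contra[OF F(2,3) \<open>0 < slope_a h\<close> h(2) _ _ F(5,6)])
    show "slope_a h * (u - a) < v - a" "u - a < slope_a h * (v - a)"
      using h(3,4) F(2) \<open>0 < slope_a h\<close> unfolding r_def by (simp_all add: pos_less_divide_eq field_simps)
    show "s * u + c < b" using F(3,6,7) by auto
    show "\<forall>t\<in>{a..v}. h t = a + slope_a h * (t - a)" using lin(1) F(4) unfolding linear_germ_right by auto
    show "\<forall>t\<in>{u..v}. h (F t) = b + slope_b h * (F t - b)"
      using lin(2) F(7) unfolding linear_germ_left by fastforce
    show "F (h t) = h (F t)" for t using comm[OF h(1) F(1)] by (metis comp_apply)
  qed
qed

lemma slope_a_not_accumulates: "\<not> slope_a_accumulates"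
proof
  assume acc: "slope_a_accumulates"
  then have "k = id" if "k \<in> H" "slope_a k = 1" for k using slope_a_faithful_if_accumulates that by blast
  then have "f \<circ> g = g \<circ> f" if "f \<in> H" "g \<in> H" for f g using commute_if_slope_a_faithful that by blast
  then show False using abelian_slope_a_not_accumulates acc by blast
qed

definition log_slopes :: "(real \<Rightarrow> real) \<Rightarrow> real \<times> real" where
  "log_slopes h = (ln (slope_a h), ln (slope_b h))"

lemma log_slopes_comp:
  assumes "f \<in> H" "g \<in> H" shows "log_slopes (g \<circ> f) = log_slopes f + log_slopes g"
  using slope_a_pos[OF assms(1)] slope_a_pos[OF assms(2)] slope_b_pos[OF assms(1)] slope_b_pos[OF assms(2)]
  unfolding log_slopes_def by (simp add: slope_a_comp[OF assms] slope_b_comp[OF assms] ln_mult)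

lemma log_slopes_inv: assumes "f \<in> H" shows "log_slopes (inv f) = - log_slopes f"
  using slope_a_pos[OF assms] slope_b_pos[OF assms]
  unfolding log_slopes_def by (simp add: slope_a_inv[OF assms] slope_b_inv[OF assms] ln_div)

lemma log_slopes_id: "log_slopes id = 0"
  unfolding log_slopes_def by (simp add: slope_a_id slope_b_id zero_prod_def)

lemma log_slopes_diff: "f \<in> H \<Longrightarrow> g \<in> H \<Longrightarrow> log_slopes f - log_slopes g = log_slopes (inv g \<circ> f)"
  by (simp add: log_slopes_comp log_slopes_inv H_inv)

lemma inj_on_fst_log_slopes: "inj_on fst (log_slopes ` H)"
proof (rule inj_onI)
  fix x y assume "x \<in> log_slopes ` H" "y \<in> log_slopes ` H" "fst x = fst y"
  then obtain f g where fg: "f \<in> H" "g \<in> H" "x = log_slopes f" "y = log_slopes g" by blast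
  define k where "k = inv g \<circ> f"
  have "k \<in> H" unfolding k_def using fg H_inv H_comp by blast
  have k: "log_slopes k = x - y" using log_slopes_diff[OF fg(1,2)] fg(3,4) unfolding k_def by simp
  then have "fst (log_slopes k) = 0" using \<open>fst x = fst y\<close> by simp
  then have "slope_a k = 1" using slope_a_pos[OF \<open>k \<in> H\<close>] unfolding log_slopes_def by simp
  then have "snd (log_slopes k) = 0" using slope_a_eq_1_iff[OF \<open>k \<in> H\<close>] unfolding log_slopes_def by simp
  then show "x = y" using \<open>fst x = fst y\<close> k by (simp add: prod_eq_iff)
qed

lemma log_slopes_trivial_or_cyclic:
  "log_slopes ` H = {0} \<or> (\<exists>\<psi> :: real \<times> real \<Rightarrow> int. bij_betw \<psi> (log_slopes ` H) UNIV \<and>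
     (\<forall>x\<in>log_slopes ` H. \<forall>y\<in>log_slopes ` H. \<psi> (x + y) = \<psi> x + \<psi> y))"
proof -
  obtain r where r: "1 < r" "\<forall>h\<in>H. \<not> (1 < slope_a h \<and> slope_a h < r)"
    using slope_a_not_accumulates unfolding slope_a_accumulates_def by auto
  show ?thesis
  proof (rule subgroup_with_discrete_injective_fst[OF _ _ inj_on_fst_log_slopes, of "ln r"])
    show "0 \<in> log_slopes ` H" using log_slopes_id H_id by (metis image_eqI)
    show "x - y \<in> log_slopes ` H" if "x \<in> log_slopes ` H" "y \<in> log_slopes ` H" for x y
      using that log_slopes_diff H_comp H_inv by blast
    show "0 < ln r" using r(1) by simp
    show "ln r \<le> fst x" if x: "x \<in> log_slopes ` H" "0 < fst x" for x
    proof -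
      obtain h where h: "h \<in> H" "x = log_slopes h" using x(1) by blast
      then have "1 < slope_a h" using x(2) slope_a_pos[of h] unfolding log_slopes_def by simp
      then have "r \<le> slope_a h" using r(2) h(1) by auto
      then show ?thesis using r(1) h(2) unfolding log_slopes_def by simp
    qed
  qed
qed

end

theorem lemma9:
  fixes H :: "(real \<Rightarrow> real) set" and a b :: real
    and \<phi> :: "(real \<Rightarrow> real) \<Rightarrow> real \<times> real"
  assumes "PL_subgroup H" and "balanced H"
    and "group_orbitals H = {{a<..<b}}"
    and "\<And>h. \<phi> h = (ln (right_deriv h a), ln (left_deriv h b))"
  shows "(\<forall>f\<in>H. \<forall>g\<in>H. \<phi> (g \<circ> f) = (fst (\<phi> f) + fst (\<phi> g), snd (\<phi> f) + snd (\<phi> g)))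
    \<and> (\<phi> ` H = {(0, 0)} \<or>
       (\<exists>\<psi> :: real \<times> real \<Rightarrow> int. bij_betw \<psi> (\<phi> ` H) UNIV \<and>
          (\<forall>x\<in>\<phi> ` H. \<forall>y\<in>\<phi> ` H. \<psi> (fst x + fst y, snd x + snd y) = \<psi> x + \<psi> y)))"
proof -
  interpret balanced_single_orbital H a b using assms(1-3) by unfold_locales
  have \<phi>: "\<phi> = log_slopes"
    using assms(4) by (simp add: fun_eq_iff log_slopes_def slope_a_def slope_b_def)
  have pair_add: "(fst x + fst y, snd x + snd y) = x + y" for x y :: "real \<times> real"
    by (simp add: plus_prod_def)
  show ?thesis
    using log_slopes_comp log_slopes_trivial_or_cyclic unfolding \<phi> pair_add zero_prod_def[symmetric] by auto
qed

end
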